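(* Assume the standing hypotheses of the context and let $\varepsilon\in(0,\varepsilon_0]$. Then $\mathcal E_\varepsilon$ is lower semicontinuous on $\mathcal P_2(\mathbb R^d)^2$ with respect to (componentwise) weak $L^1(\mathbb R^d)$-convergence.
   Context: Let $d\ge1$. Standing hypotheses. (K): $K:\mathbb R^d\to[0,\infty)$ radially symmetric, $K(0)=0$, $K\in C^2$, $\nabla^2K\ge\lambda\,\mathrm{Id}$ for some $\lambda>0$, $\|\nabla^2K\|\le C_K$. (F): for $j=1,2$, $F_j:[0,\infty)\to[0,\infty)$ is $C^2$, $F_j''>0$ on $(0,\infty)$, $F_j(0)=F_j'(0)=0$, $\liminf_{r\to\infty}F_j''(r)>0$, $\limsup_{r\to\infty}F_j'(r)/F_j(r)<\infty$; there are $m_j,M_j>0,\beta_j\ge0,r_0>0$ with $m_jr^{\beta_j}\le F_j''(r)\le M_jr^{\beta_j}$ on $[0,r_0]$; $F_j(r)-rF_j'(r)+r^2F_j''(r)\ge0$. (h): $h:[0,\infty)^2\to\mathbb R$ is $C^2$, $h$ and $\nabla h$ vanish on $\{r_1=0\}\cup\{r_2=0\}$. ($\theta$): with $\theta_{j,i}(\mathbf u)=\partial_{r_i}\partial_{r_j}h(\mathbf r)/F_i''(r_i)$, $r_k=(F_k')^{-1}(u_k)$, each $\theta_{j,i}$ is locally Lipschitz on $[0,\infty)^2$ and $|\theta_{j,i}(\mathbf u)|\le\kappa_{j,i}\min\{1,u_1,u_2,\sqrt{(F_i')^{-1}(u_i)/(F_j')^{-1}(u_j)}\}$ for constants $\kappa_{j,i}>0$.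 Notation: $\mathcal P_2(\mathbb R^d)$ probability measures with finite second moment (absolutely continuous ones identified with densities); $\mathcal E_\varepsilon(\boldsymbol\rho)=\int[F_1(\rho_1)+F_2(\rho_2)+\varepsilon h(\rho_1,\rho_2)+\rho_1K*\rho_2]dx$, $=+\infty$ unless both components are absolutely continuous with integrand in $L^1$. $\varepsilon_0>0$ is a number such that $\mathbf r\mapsto F_1(r_1)+F_2(r_2)+2\varepsilon_0h(\mathbf r)$ is convex on $[0,\infty)^2$. *)

theory Defs
  imports "HOL-Analysis.Analysis"
begin

definition hyp_K :: "('a::euclidean_space \<Rightarrow> real) \<Rightarrow> bool" where
  "hyp_K K \<longleftrightarrow>
     (\<forall>x. K x \<ge> 0) \<and> (\<forall>x y. norm x = norm y \<longrightarrow> K x = K y) \<and> K 0 = 0 \<and>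
     (\<exists>(DK :: 'a \<Rightarrow> 'a) (HK :: 'a \<Rightarrow> ('a \<Rightarrow>\<^sub>L 'a)) (lam::real) (CK::real).
        lam > 0 \<and>
        (\<forall>x. (K has_derivative (\<lambda>v. DK x \<bullet> v)) (at x)) \<and>
        (\<forall>x. (DK has_derivative blinfun_apply (HK x)) (at x)) \<and>
        continuous_on UNIV HK \<and>
        (\<forall>x v. lam * (norm v)\<^sup>2 \<le> v \<bullet> blinfun_apply (HK x) v) \<and>
        (\<forall>x. norm (HK x) \<le> CK))"

definition hyp_F :: "(real \<Rightarrow> real) \<Rightarrow> (real \<Rightarrow> real) \<Rightarrow> (real \<Rightarrow> real) \<Rightarrow> bool" where
  "hyp_F F F' F'' \<longleftrightarrow>
     (\<forall>r\<ge>0. F r \<ge> 0) \<and>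
     (\<forall>r\<ge>0. (F has_real_derivative F' r) (at r within {0..})) \<and>
     (\<forall>r\<ge>0. (F' has_real_derivative F'' r) (at r within {0..})) \<and>
     continuous_on {0..} F'' \<and>
     (\<forall>r>0. F'' r > 0) \<and>
     F 0 = 0 \<and> F' 0 = 0 \<and>
     Liminf at_top (\<lambda>r. ereal (F'' r)) > 0 \<and>
     Limsup at_top (\<lambda>r. ereal (F' r / F r)) < \<infinity> \<and>
     (\<exists>m M \<beta> r0. m > 0 \<and> M > 0 \<and> \<beta> \<ge> 0 \<and> r0 > 0 \<and>
        (\<forall>r. 0 < r \<and> r \<le> r0 \<longrightarrow> m * r powr \<beta> \<le> F'' r \<and> F'' r \<le> M * r powr \<beta>)) \<and>
     (\<forall>r\<ge>0. F r - r * F' r + r\<^sup>2 * F'' r \<ge> 0)"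

definition quad :: "(real \<times> real) set" where
  "quad = {p. fst p \<ge> 0 \<and> snd p \<ge> 0}"

definition pc :: "nat \<Rightarrow> real \<times> real \<Rightarrow> real" where
  "pc k p = (if k = 1 then fst p else snd p)"

definition hyp_h :: "(real \<times> real \<Rightarrow> real) \<Rightarrow> (nat \<Rightarrow> real \<times> real \<Rightarrow> real)
     \<Rightarrow> (nat \<Rightarrow> nat \<Rightarrow> real \<times> real \<Rightarrow> real) \<Rightarrow> bool" where
  "hyp_h h dh ddh \<longleftrightarrow>
     (\<forall>p\<in>quad. (h has_derivative (\<lambda>v. dh 1 p * fst v + dh 2 p * snd v)) (at p within quad)) \<and>
     (\<forall>k\<in>{1,2}. \<forall>p\<in>quad.
        (dh k has_derivative (\<lambda>v. ddh k 1 p * fst v + ddh k 2 p * snd v)) (at p within quad)) \<and>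
     (\<forall>k\<in>{1,2}. \<forall>l\<in>{1,2}. continuous_on quad (ddh k l)) \<and>
     (\<forall>p\<in>quad. fst p = 0 \<or> snd p = 0 \<longrightarrow> h p = 0 \<and> dh 1 p = 0 \<and> dh 2 p = 0)"

definition rr :: "(nat \<Rightarrow> real \<Rightarrow> real) \<Rightarrow> real \<times> real \<Rightarrow> real \<times> real" where
  "rr dF u = (inv_into {0..} (dF 1) (fst u), inv_into {0..} (dF 2) (snd u))"

definition theta :: "(nat \<Rightarrow> real \<Rightarrow> real) \<Rightarrow> (nat \<Rightarrow> real \<Rightarrow> real)
     \<Rightarrow> (nat \<Rightarrow> nat \<Rightarrow> real \<times> real \<Rightarrow> real) \<Rightarrow> nat \<Rightarrow> nat \<Rightarrow> real \<times> real \<Rightarrow> real" where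
  "theta dF ddF ddh j i u = ddh j i (rr dF u) / ddF i (pc i (rr dF u))"

definition locally_lipschitz_on :: "(real \<times> real) set \<Rightarrow> (real \<times> real \<Rightarrow> real) \<Rightarrow> bool" where
  "locally_lipschitz_on S f \<longleftrightarrow>
     (\<forall>u\<in>S. \<exists>e>0. \<exists>L. \<forall>v\<in>ball u e \<inter> S. \<forall>w\<in>ball u e \<inter> S. \<bar>f v - f w\<bar> \<le> L * dist v w)"

definition hyp_theta :: "(nat \<Rightarrow> real \<Rightarrow> real) \<Rightarrow> (nat \<Rightarrow> real \<Rightarrow> real)
     \<Rightarrow> (nat \<Rightarrow> nat \<Rightarrow> real \<times> real \<Rightarrow> real) \<Rightarrow> bool" where
  "hyp_theta dF ddF ddh \<longleftrightarrow>
     (\<forall>j\<in>{1,2}. \<forall>i\<in>{1,2}.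
        locally_lipschitz_on quad (theta dF ddF ddh j i) \<and>
        (\<exists>\<kappa>>0. \<forall>u\<in>quad. \<bar>theta dF ddF ddh j i u\<bar> \<le>
            \<kappa> * min (min 1 (fst u)) (min (snd u) (sqrt (pc i (rr dF u) / pc j (rr dF u))))))"

definition conv :: "('a::euclidean_space \<Rightarrow> real) \<Rightarrow> ('a \<Rightarrow> real) \<Rightarrow> 'a \<Rightarrow> real" where
  "conv K \<rho> x = (\<integral>y. K (x - y) * \<rho> y \<partial>lborel)"

definition energy :: "real \<Rightarrow> (nat \<Rightarrow> real \<Rightarrow> real) \<Rightarrow> (real \<times> real \<Rightarrow> real)
     \<Rightarrow> ('a::euclidean_space \<Rightarrow> real) \<Rightarrow> ('a \<Rightarrow> real) \<Rightarrow> ('a \<Rightarrow> real) \<Rightarrow> ereal" where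
  "energy \<epsilon> F h K \<rho>1 \<rho>2 =
     (let f = (\<lambda>x. F 1 (\<rho>1 x) + F 2 (\<rho>2 x) + \<epsilon> * h (\<rho>1 x, \<rho>2 x) + \<rho>1 x * conv K \<rho>2 x)
      in if integrable lborel f then ereal (\<integral>x. f x \<partial>lborel) else \<infinity>)"

text \<open>Probability densities with finite second moment (absolutely continuous elements of P_2).\<close>
definition P2_density :: "('a::euclidean_space \<Rightarrow> real) \<Rightarrow> bool" where
  "P2_density \<rho> \<longleftrightarrow> (\<forall>x. \<rho> x \<ge> 0) \<and> integrable lborel \<rho> \<and> (\<integral>x. \<rho> x \<partial>lborel) = 1 \<and>
     integrable lborel (\<lambda>x. (norm x)\<^sup>2 * \<rho> x)"

definition weakL1_conv :: "(nat \<Rightarrow> 'a::euclidean_space \<Rightarrow> real) \<Rightarrow> ('a \<Rightarrow> real) \<Rightarrow> bool" where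
  "weakL1_conv \<rho>s \<rho> \<longleftrightarrow>
     (\<forall>g. g \<in> borel_measurable lborel \<and> bounded (range g) \<longrightarrow>
        (\<lambda>n. \<integral>x. \<rho>s n x * g x \<partial>lborel) \<longlonglongrightarrow> (\<integral>x. \<rho> x * g x \<partial>lborel))"

end

theory Submission
  imports Defs
begin

text \<open>
  Write \<Phi>(r) = F1(r1) + F2(r2) + \<epsilon> h(r) for the local energy density, so that the energy is the
  sum of the integrals of \<Phi>(\<rho>1, \<rho>2) and of \<rho>1 (K * \<rho>2), two nonnegative integrands which are
  treated separately.

  For \<epsilon> \<le> \<epsilon>0, \<Phi> is a convex combination of F1 + F2 and F1 + F2 + 2 \<epsilon>0 h, hence lies above its
  tangent planes on the quadrant. Integrating against \<rho>_n the tangent plane at \<rho>, cut off to a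
  bounded set on which \<rho> is bounded, gives lower bounds for the local energy of \<rho>_n that
  converge by weak L1 convergence to the cut-off local energy of \<rho>; monotone convergence removes the
  cut-off.

  For the interaction, K is replaced by continuous compactly supported truncations K_R. The functions
  K_R * \<rho>2_n are uniformly bounded, equicontinuous and converge pointwise, hence locally
  uniformly; together with the tightness of the weakly convergent \<rho>1_n this yields convergence
  of the truncated interaction energies, and monotone convergence in R concludes. The Hessian bound
  gives K quadratic growth, so K * \<rho> is finite for densities with finite second moment.
\<close>

section \<open>Tangent inequalities\<close>

lemma convex_on_above_tangent_within:
  fixes G :: "'a::real_normed_vector \<Rightarrow> real"
  assumes cv: "convex_on S G" and S: "convex S" and p: "p \<in> S" and q: "q \<in> S"
    and d: "(G has_derivative G') (at p within S)"
  shows "G' (q - p) \<le> G q - G p"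
proof -
  define \<gamma> where "\<gamma> t = p + t *\<^sub>R (q - p)" for t :: real
  have \<gamma>_conv: "\<gamma> t = (1 - t) *\<^sub>R p + t *\<^sub>R q" for t
    by (simp add: \<gamma>_def algebra_simps)
  have "\<gamma> ` {0..1} \<subseteq> S"
    using S p q by (auto simp: \<gamma>_conv convex_alt)
  then have "(G has_derivative G') (at (\<gamma> 0) within \<gamma> ` {0..1})"
    using d by (simp add: \<gamma>_def has_derivative_subset)
  moreover have "(\<gamma> has_derivative (\<lambda>t. t *\<^sub>R (q - p))) (at 0 within {0..1})"
    unfolding \<gamma>_def by (auto intro!: derivative_eq_intros)
  ultimately have "((\<lambda>t. G (\<gamma> t)) has_derivative (\<lambda>t. G' (t *\<^sub>R (q - p)))) (at 0 within {0..1})"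
    by (rule has_derivative_in_compose[rotated])
  moreover have "(\<lambda>t. G' (t *\<^sub>R (q - p))) = (*) (G' (q - p))"
    using d has_derivative_linear linear_scale by fastforce
  ultimately have "((\<lambda>t. G (\<gamma> t)) has_real_derivative G' (q - p)) (at 0 within {0..1})"
    by (simp only: has_field_derivative_def)
  then have lim: "((\<lambda>t. (G (\<gamma> t) - G (\<gamma> 0)) / (t - 0)) \<longlongrightarrow> G' (q - p)) (at_right 0)"
    by (simp add: has_field_derivative_iff at_within_Icc_at_right)
  have "eventually (\<lambda>t. (G (\<gamma> t) - G (\<gamma> 0)) / (t - 0) \<le> G q - G p) (at_right (0::real))"
    unfolding eventually_at_right_field
  proof (intro exI[of _ 1] conjI allI impI)
    fix t :: real assume "0 < t" "t < 1"
    then have "G (\<gamma> t) \<le> (1 - t) * G p + t * G q"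
      using convex_onD[OF cv, of t p q] p q by (simp add: \<gamma>_conv)
    then have "G (\<gamma> t) - G (\<gamma> 0) \<le> t * (G q - G p)"
      by (simp add: \<gamma>_def algebra_simps)
    with \<open>0 < t\<close> show "(G (\<gamma> t) - G (\<gamma> 0)) / (t - 0) \<le> G q - G p"
      by (simp add: divide_le_eq mult.commute)
  qed simp
  then show ?thesis
    using tendsto_le[OF trivial_limit_at_right_real tendsto_const lim] by blast
qed

lemma real_mvt_atLeast:
  fixes f f' :: "real \<Rightarrow> real"
  assumes deriv: "\<And>r. c \<le> r \<Longrightarrow> (f has_real_derivative f' r) (at r within {c..})"
    and "c \<le> a" "a < b"
  obtains z where "a < z" "z < b" "f b - f a = f' z * (b - a)"
proof -
  have "(f has_derivative (\<lambda>h. f' x * h)) (at x within {a..b})" if "a \<le> x" "x \<le> b" for x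
    using deriv[of x] that \<open>c \<le> a\<close>
    by (auto simp: has_field_derivative_def intro: has_derivative_subset)
  then obtain z where "z \<in> {a<..<b}" "f b - f a = f' z * (b - a)"
    using mvt_simple[OF \<open>a < b\<close>, of f "\<lambda>x. (*) (f' x)"] by auto
  then show ?thesis using that by auto
qed

lemma deriv_nonneg_imp_mono_on_atLeast:
  fixes f f' :: "real \<Rightarrow> real"
  assumes deriv: "\<And>r. c \<le> r \<Longrightarrow> (f has_real_derivative f' r) (at r within {c..})"
    and nonneg: "\<And>r. c < r \<Longrightarrow> 0 \<le> f' r"
  shows "mono_on {c..} f"
proof (rule mono_onI)
  fix a b assume ab: "a \<in> {c..}" "b \<in> {c..}" "a \<le> b"
  show "f a \<le> f b"
  proof (cases "a = b")
    case False
    then obtain z where "a < z" "f b - f a = f' z * (b - a)"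
      using real_mvt_atLeast[OF deriv, of a b] ab by auto
    moreover have "0 \<le> f' z * (b - a)"
      using ab nonneg[of z] \<open>a < z\<close> by simp
    ultimately show ?thesis by simp
  qed simp
qed

lemma mono_deriv_imp_above_tangent:
  fixes f f' :: "real \<Rightarrow> real"
  assumes deriv: "\<And>r. c \<le> r \<Longrightarrow> (f has_real_derivative f' r) (at r within {c..})"
    and mono: "mono_on {c..} f'" and p: "c \<le> p" and q: "c \<le> q"
  shows "f' p * (q - p) \<le> f q - f p"
proof (cases p q rule: linorder_cases)
  case less
  then obtain z where "p < z" "f q - f p = f' z * (q - p)"
    using real_mvt_atLeast[OF deriv p] by blast
  with less p mono_onD[OF mono, of p z] show ?thesis by (simp add: mult_right_mono)
next
  case greater
  then obtain z where "z < p" "q < z" "f p - f q = f' z * (p - q)"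
    using real_mvt_atLeast[OF deriv q] by blast
  moreover have "f' z * (p - q) \<le> f' p * (p - q)"
    using greater q \<open>q < z\<close> mono_onD[OF mono, of z p] \<open>z < p\<close> by (intro mult_right_mono) auto
  ultimately show ?thesis by (simp add: algebra_simps)
qed simp

lemma hyp_F_continuous:
  assumes "hyp_F F F' F''"
  shows "continuous_on {0..} F" "continuous_on {0..} F'"
  using assms unfolding hyp_F_def
  by (metis DERIV_continuous atLeast_iff continuous_on_eq_continuous_within)+

lemma hyp_F_above_tangent:
  assumes "hyp_F F F' F''" and "0 \<le> p" "0 \<le> q"
  shows "F' p * (q - p) \<le> F q - F p"
proof (rule mono_deriv_imp_above_tangent[OF _ _ assms(2,3)])
  show "(F has_real_derivative F' r) (at r within {0..})" if "0 \<le> r" for r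
    using assms(1) that by (simp add: hyp_F_def)
  show "mono_on {0..} F'"
    using assms(1) by (intro deriv_nonneg_imp_mono_on_atLeast[of 0 F' F''])
      (auto simp: hyp_F_def less_imp_le)
qed

lemma has_derivative_comp_linear_within:
  fixes f f' :: "real \<Rightarrow> real"
  assumes "\<And>r. r \<in> T \<Longrightarrow> (f has_real_derivative f' r) (at r within T)"
    and "bounded_linear \<pi>" "\<pi> ` S \<subseteq> T" "p \<in> S"
  shows "((\<lambda>x. f (\<pi> x)) has_derivative (\<lambda>v. f' (\<pi> p) * \<pi> v)) (at p within S)"
  using has_derivative_in_compose2[of T f "\<lambda>r. (*) (f' r)" \<pi> S p \<pi>] assms
  by (simp add: has_field_derivative_def bounded_linear_imp_has_derivative)

lemma convex_quad: "convex quad"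
proof -
  have "quad = {0..} \<times> {0..}" by (auto simp: quad_def)
  then show ?thesis by (metis convex_Times convex_real_interval(1))
qed

definition local_density :: "real \<Rightarrow> (nat \<Rightarrow> real \<Rightarrow> real) \<Rightarrow> (real \<times> real \<Rightarrow> real) \<Rightarrow> real \<times> real \<Rightarrow> real"
  where "local_density \<epsilon> F h p = F 1 (fst p) + F 2 (snd p) + \<epsilon> * h p"

definition local_density_deriv ::
    "real \<Rightarrow> (nat \<Rightarrow> real \<Rightarrow> real) \<Rightarrow> (nat \<Rightarrow> real \<times> real \<Rightarrow> real) \<Rightarrow> nat \<Rightarrow> real \<times> real \<Rightarrow> real"
  where "local_density_deriv \<epsilon> dF dh k p = dF k (pc k p) + \<epsilon> * dh k p"

lemma continuous_on_quad_pc: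
  assumes "continuous_on {0..} f"
  shows "continuous_on quad (\<lambda>p. f (pc k p))"
proof -
  have "continuous_on quad (\<lambda>p. f (fst p))" "continuous_on quad (\<lambda>p. f (snd p))"
    by (auto intro!: continuous_on_compose2[OF assms] continuous_intros simp: quad_def)
  then show ?thesis by (cases "k = 1") (simp_all add: pc_def)
qed

lemma hyp_h_continuous:
  assumes "hyp_h h dh ddh"
  shows "continuous_on quad h" and "k \<in> {1, 2} \<Longrightarrow> continuous_on quad (dh k)"
proof -
  have "\<forall>p\<in>quad. (h has_derivative (\<lambda>v. dh 1 p * fst v + dh 2 p * snd v)) (at p within quad)"
    and "\<forall>k\<in>{1,2}. \<forall>p\<in>quad.
        (dh k has_derivative (\<lambda>v. ddh k 1 p * fst v + ddh k 2 p * snd v)) (at p within quad)"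
    using assms unfolding hyp_h_def by blast+
  then show "continuous_on quad h" and "k \<in> {1, 2} \<Longrightarrow> continuous_on quad (dh k)"
    by (meson continuous_on_eq_continuous_within has_derivative_continuous)+
qed

lemma local_density_continuous:
  assumes "\<forall>j\<in>{1,2}. hyp_F (F j) (dF j) (ddF j)" and "hyp_h h dh ddh"
  shows "continuous_on quad (local_density \<epsilon> F h)"
proof -
  have "continuous_on quad (\<lambda>p. F j (pc j p))" if "j \<in> {1, 2}" for j
    using assms(1) that by (blast intro: continuous_on_quad_pc hyp_F_continuous)
  from this[of 1] this[of 2] show ?thesis
    unfolding local_density_def[abs_def] using hyp_h_continuous(1)[OF assms(2)]
    by (simp add: pc_def continuous_on_add continuous_on_mult_left)
qed

lemma local_density_deriv_continuous:
  assumes "\<forall>j\<in>{1,2}. hyp_F (F j) (dF j) (ddF j)" and "hyp_h h dh ddh" and "k \<in> {1, 2}"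
  shows "continuous_on quad (local_density_deriv \<epsilon> dF dh k)"
proof -
  have "continuous_on quad (\<lambda>p. dF k (pc k p))"
    using assms(1,3) by (blast intro: continuous_on_quad_pc hyp_F_continuous)
  then show ?thesis
    unfolding local_density_deriv_def[abs_def] using hyp_h_continuous(2)[OF assms(2,3)]
    by (simp add: continuous_on_add continuous_on_mult_left)
qed

lemma has_derivative_F_plus_h_within_quad:
  fixes F dF ddF :: "nat \<Rightarrow> real \<Rightarrow> real"
  assumes hF: "\<forall>j\<in>{1,2}. hyp_F (F j) (dF j) (ddF j)" and hh: "hyp_h h dh ddh" and p: "p \<in> quad"
  shows "((\<lambda>p. F 1 (fst p) + F 2 (snd p) + c * h p) has_derivative
      (\<lambda>v. dF 1 (fst p) * fst v + dF 2 (snd p) * snd v + c * (dh 1 p * fst v + dh 2 p * snd v)))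
      (at p within quad)"
proof -
  have "((\<lambda>p. F j (\<pi> p)) has_derivative (\<lambda>v. dF j (\<pi> p) * \<pi> v)) (at p within quad)"
    if "j \<in> {1, 2}" "bounded_linear \<pi>" "\<pi> ` quad \<subseteq> {0..}" for j \<pi>
  proof -
    have "hyp_F (F j) (dF j) (ddF j)" using hF that(1) by blast
    then show ?thesis
      using that(2,3) p by (intro has_derivative_comp_linear_within) (simp_all add: hyp_F_def)
  qed
  moreover have "fst ` quad \<subseteq> {0..}" "snd ` quad \<subseteq> {0..}"
    by (auto simp: quad_def)
  moreover have "(h has_derivative (\<lambda>v. dh 1 p * fst v + dh 2 p * snd v)) (at p within quad)"
    using hh p by (simp add: hyp_h_def)
  ultimately show ?thesis
    by (intro has_derivative_add has_derivative_mult_right) (blast intro: bounded_linear_fst bounded_linear_snd)+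
qed

lemma local_density_above_tangent:
  assumes hF: "\<forall>j\<in>{1,2}. hyp_F (F j) (dF j) (ddF j)" and hh: "hyp_h h dh ddh"
    and cvx: "convex_on quad (\<lambda>p. F 1 (fst p) + F 2 (snd p) + 2 * \<epsilon>0 * h p)"
    and \<epsilon>: "0 < \<epsilon>" "\<epsilon> \<le> \<epsilon>0" and p: "p \<in> quad" and q: "q \<in> quad"
  shows "local_density \<epsilon> F h p + local_density_deriv \<epsilon> dF dh 1 p * (fst q - fst p)
      + local_density_deriv \<epsilon> dF dh 2 p * (snd q - snd p) \<le> local_density \<epsilon> F h q"
proof -
  have hF1: "hyp_F (F 1) (dF 1) (ddF 1)" and hF2: "hyp_F (F 2) (dF 2) (ddF 2)"
    using hF by auto
  define G where "G p = F 1 (fst p) + F 2 (snd p) + 2 * \<epsilon>0 * h p" for p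
  have dG: "(G has_derivative (\<lambda>v. dF 1 (fst p) * fst v + dF 2 (snd p) * snd v
      + 2 * \<epsilon>0 * (dh 1 p * fst v + dh 2 p * snd v))) (at p within quad)"
    unfolding G_def[abs_def] by (rule has_derivative_F_plus_h_within_quad[OF hF hh p])
  define X where "X = (F 1 (fst q) - F 1 (fst p) - dF 1 (fst p) * (fst q - fst p))
      + (F 2 (snd q) - F 2 (snd p) - dF 2 (snd p) * (snd q - snd p))"
  define Y where "Y = G q - G p - (dF 1 (fst p) * (fst q - fst p) + dF 2 (snd p) * (snd q - snd p)
      + 2 * \<epsilon>0 * (dh 1 p * (fst q - fst p) + dh 2 p * (snd q - snd p)))"
  have "0 \<le> Y"
    using convex_on_above_tangent_within[OF cvx[folded G_def] convex_quad p q dG] by (simp add: Y_def)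
  moreover have "0 \<le> X"
    using hyp_F_above_tangent[OF hF1, of "fst p" "fst q"] hyp_F_above_tangent[OF hF2, of "snd p" "snd q"]
      p q by (simp add: X_def quad_def)
  \<comment> \<open>The density is the convex combination (1 - t) (F1 + F2) + t G of two functions lying above
    their tangents.\<close>
  moreover define t where "t = \<epsilon> / (2 * \<epsilon>0)"
  moreover have "0 \<le> t" "t \<le> 1" and \<epsilon>_eq: "\<epsilon> = 2 * \<epsilon>0 * t"
    using \<epsilon> by (auto simp: t_def field_simps)
  moreover have "local_density \<epsilon> F h q - (local_density \<epsilon> F h p
      + local_density_deriv \<epsilon> dF dh 1 p * (fst q - fst p)
      + local_density_deriv \<epsilon> dF dh 2 p * (snd q - snd p)) = (1 - t) * X + t * Y"
    unfolding local_density_def local_density_deriv_def X_def Y_def G_def \<epsilon>_eq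
    by (simp add: pc_def algebra_simps)
  ultimately show ?thesis
    by (smt (verit) mult_nonneg_nonneg)
qed

lemma local_density_nonneg:
  assumes hF: "\<forall>j\<in>{1,2}. hyp_F (F j) (dF j) (ddF j)" and hh: "hyp_h h dh ddh"
    and cvx: "convex_on quad (\<lambda>p. F 1 (fst p) + F 2 (snd p) + 2 * \<epsilon>0 * h p)"
    and \<epsilon>: "0 < \<epsilon>" "\<epsilon> \<le> \<epsilon>0" and q: "q \<in> quad"
  shows "0 \<le> local_density \<epsilon> F h q"
proof -
  have 0: "(0, 0) \<in> quad" by (simp add: quad_def)
  have "F j 0 = 0" "dF j 0 = 0" if "j \<in> {1, 2}" for j
    using hF that unfolding hyp_F_def by blast+
  moreover have "h (0, 0) = 0" "dh 1 (0, 0) = 0" "dh 2 (0, 0) = 0"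
    using hh 0 unfolding hyp_h_def by auto
  ultimately have "local_density \<epsilon> F h (0, 0) = 0" "local_density_deriv \<epsilon> dF dh 1 (0, 0) = 0"
    "local_density_deriv \<epsilon> dF dh 2 (0, 0) = 0"
    by (auto simp: local_density_def local_density_deriv_def pc_def)
  then show ?thesis
    using local_density_above_tangent[OF hF hh cvx \<epsilon> 0 q] by simp
qed

section \<open>Lower semicontinuity of convex integral functionals\<close>

lemma integrable_mult_bounded:
  fixes f g :: "'a \<Rightarrow> real"
  assumes "integrable M f" and "g \<in> borel_measurable M" and "\<And>x. \<bar>g x\<bar> \<le> B"
  shows "integrable M (\<lambda>x. f x * g x)"
proof (rule Bochner_Integration.integrable_bound[of _ "\<lambda>x. B * f x"])
  have "\<bar>f x\<bar> * \<bar>g x\<bar> \<le> \<bar>f x\<bar> * \<bar>B\<bar>" for x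
    using assms(3)[of x] by (intro mult_left_mono) auto
  then show "AE x in M. norm (f x * g x) \<le> norm (B * f x)"
    by (simp add: abs_mult mult.commute)
qed (use assms in \<open>auto simp: borel_measurable_integrable\<close>)

lemma integral_le_nn_integral:
  fixes f g :: "'a \<Rightarrow> real"
  assumes f: "integrable M f" and fg: "\<And>x. f x \<le> g x" and g: "\<And>x. 0 \<le> g x"
  shows "ereal (integral\<^sup>L M f) \<le> enn2ereal (\<integral>\<^sup>+x. ennreal (g x) \<partial>M)"
proof -
  have int: "integrable M (\<lambda>x. max 0 (f x))" using f by auto
  have "integral\<^sup>L M f \<le> integral\<^sup>L M (\<lambda>x. max 0 (f x))"
    using f int by (intro integral_mono) auto
  moreover have "ennreal (integral\<^sup>L M (\<lambda>x. max 0 (f x))) \<le> (\<integral>\<^sup>+x. ennreal (g x) \<partial>M)"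
    using int fg g by (subst nn_integral_eq_integral[symmetric])
      (auto intro!: nn_integral_mono ennreal_leI)
  ultimately show ?thesis
    by (metis enn2ereal_ennreal ereal_less_eq(3) integral_nonneg_AE less_eq_ennreal.rep_eq
        max.cobounded1 order_trans AE_I2)
qed

lemma borel_measurable_continuous_on_quad_comp:
  fixes f :: "real \<times> real \<Rightarrow> real"
  assumes f: "continuous_on quad f"
    and "u \<in> borel_measurable M" "v \<in> borel_measurable M" "\<And>x. 0 \<le> u x" "\<And>x. 0 \<le> v x"
  shows "(\<lambda>x. f (u x, v x)) \<in> borel_measurable M"
proof -
  \<comment> \<open>Extend f continuously to the plane by precomposing with the projection onto quad.\<close>
  define clamp where "clamp p = (max 0 (fst p), max 0 (snd p))" for p :: "real \<times> real"
  have "continuous_on UNIV clamp"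
    unfolding clamp_def by (intro continuous_intros)
  moreover have "clamp ` UNIV \<subseteq> quad"
    by (auto simp: clamp_def quad_def)
  ultimately have "continuous_on UNIV (\<lambda>p. f (clamp p))"
    by (intro continuous_on_compose2[OF f])
  then have "(\<lambda>x. f (clamp (u x, v x))) \<in> borel_measurable M"
    by (rule borel_measurable_continuous_on) (intro borel_measurable_Pair assms(2,3))
  then show ?thesis
    using assms(4,5) by (simp add: clamp_def)
qed

lemma integrable_bounded_support_cball:
  fixes f :: "'a::euclidean_space \<Rightarrow> real"
  assumes "f \<in> borel_measurable lborel" and "\<And>x. \<bar>f x\<bar> \<le> B" and "\<And>x. x \<notin> cball 0 r \<Longrightarrow> f x = 0"
  shows "integrable lborel f"
proof (rule Bochner_Integration.integrable_bound)
  show "integrable lborel (\<lambda>x. B * indicator (cball 0 r) x :: real)"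
    by (intro integrable_mult_right integrable_real_indicator emeasure_bounded_finite) auto
  have "\<bar>f x\<bar> \<le> \<bar>B * indicator (cball 0 r) x\<bar>" for x
    using assms(2,3)[of x] by (cases "x \<in> cball 0 r") (auto intro: order_trans[OF _ abs_ge_self])
  then show "AE x in lborel. norm (f x) \<le> norm (B * indicator (cball 0 r) x :: real)"
    by simp
qed (use assms in auto)

lemma ereal_le_liminf_of_tendsto_lower:
  assumes "\<And>n. ereal (s n) \<le> a n" and "s \<longlonglongrightarrow> c"
  shows "ereal c \<le> liminf a"
proof -
  have "liminf (\<lambda>n. ereal (s n)) = ereal c"
    using assms(2) by (intro lim_imp_Liminf) auto
  moreover have "liminf (\<lambda>n. ereal (s n)) \<le> liminf a"
    using assms(1) by (intro Liminf_mono) auto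
  ultimately show ?thesis by simp
qed

lemma nn_integral_le_liminf_of_approx:
  fixes g :: "'a \<Rightarrow> real" and gR :: "nat \<Rightarrow> 'a \<Rightarrow> real" and a :: "nat \<Rightarrow> ereal"
  assumes meas: "\<And>R. gR R \<in> borel_measurable M"
    and nonneg: "\<And>R x. 0 \<le> gR R x"
    and inc: "\<And>x. incseq (\<lambda>R. gR R x)"
    and lim: "\<And>x. (\<lambda>R. gR R x) \<longlonglongrightarrow> g x"
    and int: "\<And>R. integrable M (gR R)"
    and le_liminf: "\<And>R. ereal (\<integral>x. gR R x \<partial>M) \<le> liminf a"
  shows "enn2ereal (\<integral>\<^sup>+x. ennreal (g x) \<partial>M) \<le> liminf a"
proof -
  have "ennreal (g x) = (SUP R. ennreal (gR R x))" for x
  proof (rule LIMSEQ_unique)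
    show "(\<lambda>R. ennreal (gR R x)) \<longlonglongrightarrow> ennreal (g x)"
      by (rule tendsto_ennrealI[OF lim])
    show "(\<lambda>R. ennreal (gR R x)) \<longlonglongrightarrow> (SUP R. ennreal (gR R x))"
      using inc[of x] by (intro LIMSEQ_SUP) (auto simp: incseq_def ennreal_leI)
  qed
  then have "(\<integral>\<^sup>+x. ennreal (g x) \<partial>M) = (SUP R. \<integral>\<^sup>+x. ennreal (gR R x) \<partial>M)"
    using meas inc by (simp add: nn_integral_monotone_convergence_SUP incseq_def le_fun_def ennreal_leI)
  also have "\<dots> = (SUP R. ennreal (\<integral>x. gR R x \<partial>M))"
    using int nonneg by (simp add: nn_integral_eq_integral)
  also have "\<dots> \<le> e2ennreal (liminf a)"
    using le_liminf by (intro SUP_least) (metis e2ennreal_ereal e2ennreal_mono)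
  finally have "enn2ereal (\<integral>\<^sup>+x. ennreal (g x) \<partial>M) \<le> enn2ereal (e2ennreal (liminf a))"
    by (simp add: less_eq_ennreal.rep_eq)
  moreover have "0 \<le> (\<integral>x. gR 0 x \<partial>M)"
    by (intro integral_nonneg_AE AE_I2 nonneg)
  then have "0 \<le> liminf a"
    using le_liminf[of 0] by (metis ereal_less_eq(5) order_trans)
  ultimately show ?thesis by (simp add: enn2ereal_e2ennreal)
qed

lemma weakL1_conv_tendsto_integral:
  assumes "weakL1_conv \<rho>s \<rho>" and "g \<in> borel_measurable lborel" and "\<And>x. \<bar>g x\<bar> \<le> B"
  shows "(\<lambda>n. \<integral>x. \<rho>s n x * g x \<partial>lborel) \<longlonglongrightarrow> (\<integral>x. \<rho> x * g x \<partial>lborel)"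
  using assms unfolding weakL1_conv_def by (auto simp: bounded_real)

lemma weakL1_conv_integral_affine:
  fixes a1 a2 c u v :: "'a::euclidean_space \<Rightarrow> real" and us vs :: "nat \<Rightarrow> 'a \<Rightarrow> real"
  assumes c: "integrable lborel c"
    and a: "a1 \<in> borel_measurable lborel" "a2 \<in> borel_measurable lborel" "\<And>x. \<bar>a1 x\<bar> \<le> B1" "\<And>x. \<bar>a2 x\<bar> \<le> B2"
    and int: "integrable lborel u" "integrable lborel v"
      "\<And>n. integrable lborel (us n)" "\<And>n. integrable lborel (vs n)"
    and weak: "weakL1_conv us u" "weakL1_conv vs v"
  shows "integrable lborel (\<lambda>x. c x + (us n x - u x) * a1 x + (vs n x - v x) * a2 x)"
    and "(\<lambda>n. \<integral>x. c x + (us n x - u x) * a1 x + (vs n x - v x) * a2 x \<partial>lborel) \<longlonglongrightarrow> (\<integral>x. c x \<partial>lborel)"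
proof -
  have int_mult: "integrable lborel (\<lambda>x. w x * a1 x)" "integrable lborel (\<lambda>x. w x * a2 x)"
    if "integrable lborel w" for w
    using integrable_mult_bounded[OF that a(1,3)] integrable_mult_bounded[OF that a(2,4)] .
  show "integrable lborel (\<lambda>x. c x + (us n x - u x) * a1 x + (vs n x - v x) * a2 x)" for n
    using c int int_mult by (simp add: left_diff_distrib)
  have "(\<integral>x. c x + (us n x - u x) * a1 x + (vs n x - v x) * a2 x \<partial>lborel)
      = (\<integral>x. c x \<partial>lborel) + ((\<integral>x. us n x * a1 x \<partial>lborel) - (\<integral>x. u x * a1 x \<partial>lborel))
        + ((\<integral>x. vs n x * a2 x \<partial>lborel) - (\<integral>x. v x * a2 x \<partial>lborel))" for n
    using c int int_mult by (simp add: left_diff_distrib)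
  moreover have "(\<lambda>n. (\<integral>x. c x \<partial>lborel) + ((\<integral>x. us n x * a1 x \<partial>lborel) - (\<integral>x. u x * a1 x \<partial>lborel))
        + ((\<integral>x. vs n x * a2 x \<partial>lborel) - (\<integral>x. v x * a2 x \<partial>lborel)))
      \<longlonglongrightarrow> (\<integral>x. c x \<partial>lborel) + ((\<integral>x. u x * a1 x \<partial>lborel) - (\<integral>x. u x * a1 x \<partial>lborel))
        + ((\<integral>x. v x * a2 x \<partial>lborel) - (\<integral>x. v x * a2 x \<partial>lborel))"
    using weak a by (intro tendsto_intros weakL1_conv_tendsto_integral)
  ultimately show "(\<lambda>n. \<integral>x. c x + (us n x - u x) * a1 x + (vs n x - v x) * a2 x \<partial>lborel)
      \<longlonglongrightarrow> (\<integral>x. c x \<partial>lborel)"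
    by simp
qed

lemma bounded_indicator_continuous_on_quad_comp:
  fixes f :: "real \<times> real \<Rightarrow> real"
  assumes f: "continuous_on quad f" and nonneg: "\<And>x. 0 \<le> u x" "\<And>x. 0 \<le> v x"
    and bound: "\<forall>x\<in>E. u x \<le> r \<and> v x \<le> r"
  obtains B where "\<And>x. \<bar>indicator E x * f (u x, v x)\<bar> \<le> B"
proof -
  have "compact (f ` ({0..r} \<times> {0..r}))"
    by (intro compact_continuous_image continuous_on_subset[OF f] compact_Times)
      (auto simp: quad_def)
  then obtain B where B: "\<forall>p\<in>{0..r} \<times> {0..r}. \<bar>f p\<bar> \<le> B"
    by (auto dest!: compact_imp_bounded simp: bounded_real)
  have "\<bar>indicator E x * f (u x, v x)\<bar> \<le> max B 0" for x
  proof (cases "x \<in> E")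
    case True
    then have "\<bar>f (u x, v x)\<bar> \<le> B" using B nonneg bound by auto
    then show ?thesis by (simp add: True le_max_iff_disj)
  qed simp
  then show ?thesis using that by blast
qed

lemma weakL1_lsc_integral_tangent_bounded_set:
  fixes \<Phi> D1 D2 :: "real \<times> real \<Rightarrow> real"
    and u v :: "'a::euclidean_space \<Rightarrow> real" and us vs :: "nat \<Rightarrow> 'a \<Rightarrow> real"
  assumes cont: "continuous_on quad \<Phi>" "continuous_on quad D1" "continuous_on quad D2"
    and \<Phi>_nonneg: "\<And>p. p \<in> quad \<Longrightarrow> 0 \<le> \<Phi> p"
    and tangent: "\<And>p q. p \<in> quad \<Longrightarrow> q \<in> quad \<Longrightarrow>
      \<Phi> p + D1 p * (fst q - fst p) + D2 p * (snd q - snd p) \<le> \<Phi> q"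
    and nonneg: "\<And>x. 0 \<le> u x" "\<And>x. 0 \<le> v x" "\<And>n x. 0 \<le> us n x" "\<And>n x. 0 \<le> vs n x"
    and int: "integrable lborel u" "integrable lborel v"
      "\<And>n. integrable lborel (us n)" "\<And>n. integrable lborel (vs n)"
    and weak: "weakL1_conv us u" "weakL1_conv vs v"
    and E: "E \<in> sets lborel" "E \<subseteq> cball 0 r" "\<forall>x\<in>E. u x \<le> r \<and> v x \<le> r"
  shows "integrable lborel (\<lambda>x. indicator E x * \<Phi> (u x, v x))"
    and "ereal (\<integral>x. indicator E x * \<Phi> (u x, v x) \<partial>lborel)
      \<le> liminf (\<lambda>n. enn2ereal (\<integral>\<^sup>+x. ennreal (\<Phi> (us n x, vs n x)) \<partial>lborel))"
proof -
  have [measurable]: "u \<in> borel_measurable lborel" "v \<in> borel_measurable lborel" "E \<in> sets lborel"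
    using int E(1) by (auto intro: borel_measurable_integrable)
  have meas: "(\<lambda>x. indicator E x * f (u x, v x)) \<in> borel_measurable lborel"
    if "continuous_on quad f" for f :: "real \<times> real \<Rightarrow> real"
    using borel_measurable_continuous_on_quad_comp[OF that, of u lborel v] nonneg by measurable
  note bounded = bounded_indicator_continuous_on_quad_comp[OF _ nonneg(1,2) E(3)]
  obtain B0 B1 B2 where B: "\<And>x. \<bar>indicator E x * \<Phi> (u x, v x)\<bar> \<le> B0"
    "\<And>x. \<bar>indicator E x * D1 (u x, v x)\<bar> \<le> B1" "\<And>x. \<bar>indicator E x * D2 (u x, v x)\<bar> \<le> B2"
    using bounded[OF cont(1)] bounded[OF cont(2)] bounded[OF cont(3)] by metis
  show int_\<Phi>: "integrable lborel (\<lambda>x. indicator E x * \<Phi> (u x, v x))"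
  proof (rule integrable_bounded_support_cball[OF meas[OF cont(1)] B(1)])
    show "indicator E x * \<Phi> (u x, v x) = 0" if "x \<notin> cball 0 r" for x
      using that E(2) by (auto simp: indicator_def)
  qed
  \<comment> \<open>Integrate the tangent minorant of \<Phi> at (u, v), cut off outside E.\<close>
  note affine = weakL1_conv_integral_affine[OF int_\<Phi> meas[OF cont(2)] meas[OF cont(3)] B(2,3) int weak]
  show "ereal (\<integral>x. indicator E x * \<Phi> (u x, v x) \<partial>lborel)
      \<le> liminf (\<lambda>n. enn2ereal (\<integral>\<^sup>+x. ennreal (\<Phi> (us n x, vs n x)) \<partial>lborel))"
  proof (rule ereal_le_liminf_of_tendsto_lower[OF integral_le_nn_integral[OF affine(1)] affine(2)])
    fix n x
    have q: "(us n x, vs n x) \<in> quad" and p: "(u x, v x) \<in> quad"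
      using nonneg by (auto simp: quad_def)
    show "0 \<le> \<Phi> (us n x, vs n x)" using \<Phi>_nonneg[OF q] .
    show "indicator E x * \<Phi> (u x, v x) + (us n x - u x) * (indicator E x * D1 (u x, v x))
        + (vs n x - v x) * (indicator E x * D2 (u x, v x)) \<le> \<Phi> (us n x, vs n x)"
      using tangent[OF p q] \<Phi>_nonneg[OF q] by (auto simp: indicator_def algebra_simps)
  qed
qed

lemma weakL1_lsc_nn_integral_tangent:
  fixes \<Phi> D1 D2 :: "real \<times> real \<Rightarrow> real"
    and u v :: "'a::euclidean_space \<Rightarrow> real" and us vs :: "nat \<Rightarrow> 'a \<Rightarrow> real"
  assumes cont: "continuous_on quad \<Phi>" "continuous_on quad D1" "continuous_on quad D2"
    and \<Phi>_nonneg: "\<And>p. p \<in> quad \<Longrightarrow> 0 \<le> \<Phi> p"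
    and tangent: "\<And>p q. p \<in> quad \<Longrightarrow> q \<in> quad \<Longrightarrow>
      \<Phi> p + D1 p * (fst q - fst p) + D2 p * (snd q - snd p) \<le> \<Phi> q"
    and nonneg: "\<And>x. 0 \<le> u x" "\<And>x. 0 \<le> v x" "\<And>n x. 0 \<le> us n x" "\<And>n x. 0 \<le> vs n x"
    and int: "integrable lborel u" "integrable lborel v"
      "\<And>n. integrable lborel (us n)" "\<And>n. integrable lborel (vs n)"
    and weak: "weakL1_conv us u" "weakL1_conv vs v"
  shows "enn2ereal (\<integral>\<^sup>+x. ennreal (\<Phi> (u x, v x)) \<partial>lborel)
    \<le> liminf (\<lambda>n. enn2ereal (\<integral>\<^sup>+x. ennreal (\<Phi> (us n x, vs n x)) \<partial>lborel))"
proof -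
  have [measurable]: "u \<in> borel_measurable lborel" "v \<in> borel_measurable lborel"
    using int by (auto intro: borel_measurable_integrable)
  define E where "E R = {x. norm x \<le> real R \<and> u x \<le> real R \<and> v x \<le> real R}" for R :: nat
  have E: "E R \<in> sets lborel" "E R \<subseteq> cball 0 (real R)" "\<forall>x\<in>E R. u x \<le> real R \<and> v x \<le> real R"
    for R unfolding E_def by (measurable, auto)
  note bounded_set = weakL1_lsc_integral_tangent_bounded_set[OF cont \<Phi>_nonneg tangent nonneg int weak E]
  show ?thesis
  proof (rule nn_integral_le_liminf_of_approx[OF _ _ _ _ bounded_set])
    show "(\<lambda>x. indicator (E R) x * \<Phi> (u x, v x)) \<in> borel_measurable lborel" for R
      using bounded_set(1) by (rule borel_measurable_integrable)
    show "0 \<le> indicator (E R) x * \<Phi> (u x, v x)" for R x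
      using \<Phi>_nonneg nonneg by (simp add: quad_def)
    show "incseq (\<lambda>R. indicator (E R) x * \<Phi> (u x, v x))" for x
      using \<Phi>_nonneg[of "(u x, v x)"] nonneg
      by (intro incseq_SucI) (auto simp: E_def indicator_def quad_def)
    show "(\<lambda>R. indicator (E R) x * \<Phi> (u x, v x)) \<longlonglongrightarrow> \<Phi> (u x, v x)" for x
    proof (rule tendsto_eventually)
      obtain N where "max (norm x) (max (u x) (v x)) \<le> real N"
        using real_arch_simple by blast
      then show "eventually (\<lambda>R. indicator (E R) x * \<Phi> (u x, v x) = \<Phi> (u x, v x)) sequentially"
        by (intro eventually_sequentiallyI[of N]) (auto simp: E_def)
    qed
  qed
qed

section \<open>Quadratic growth of the interaction kernel\<close>

lemma hessian_bound_quadratic_remainder: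
  fixes f :: "'a::real_inner \<Rightarrow> real"
  assumes df: "\<And>x. (f has_derivative (\<lambda>v. Df x \<bullet> v)) (at x)"
    and ddf: "\<And>x. (Df has_derivative blinfun_apply (H x)) (at x)"
    and H: "\<And>x. norm (H x) \<le> C"
  shows "\<bar>f z - f 0 - Df 0 \<bullet> z\<bar> \<le> C * (norm z)\<^sup>2"
proof -
  have C: "0 \<le> C" using H[of 0] norm_ge_zero order_trans by blast
  have Df_lip: "norm (Df w - Df 0) \<le> C * norm w" for w
  proof -
    have "norm (Df w - Df 0) \<le> C * norm (w - 0)"
    proof (rule differentiable_bound[of UNIV Df "\<lambda>x. blinfun_apply (H x)" C w 0])
      show "(Df has_derivative blinfun_apply (H x)) (at x within UNIV)" for x
        using ddf by simp
      show "onorm (blinfun_apply (H x)) \<le> C" for x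
        using H by (simp add: norm_blinfun.rep_eq[symmetric])
    qed auto
    then show ?thesis by simp
  qed
  define S where "S = cball (0::'a) (norm z)"
  define g where "g w = f w - Df 0 \<bullet> w" for w
  have "norm (g z - g 0) \<le> (C * norm z) * norm (z - 0)"
  proof (rule differentiable_bound[of S g "\<lambda>w v. Df w \<bullet> v - Df 0 \<bullet> v"])
    show "(g has_derivative (\<lambda>v. Df w \<bullet> v - Df 0 \<bullet> v)) (at w within S)" for w
      unfolding g_def
      by (intro has_derivative_diff has_derivative_at_withinI[OF df]
          bounded_linear_imp_has_derivative bounded_linear_inner_right)
    show "onorm (\<lambda>v. Df w \<bullet> v - Df 0 \<bullet> v) \<le> C * norm z" if "w \<in> S" for w
    proof (rule onorm_bound)
      show "0 \<le> C * norm z" using C by simp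
      fix v
      have "norm (Df w \<bullet> v - Df 0 \<bullet> v) \<le> norm (Df w - Df 0) * norm v"
        by (metis Cauchy_Schwarz_ineq2 inner_diff_left real_norm_def)
      also have "\<dots> \<le> (C * norm z) * norm v"
        using Df_lip[of w] that C unfolding S_def
        by (intro mult_right_mono) (auto intro: order_trans mult_left_mono)
      finally show "norm (Df w \<bullet> v - Df 0 \<bullet> v) \<le> C * norm z * norm v" .
    qed
  qed (auto simp: S_def)
  then show ?thesis by (simp add: g_def power2_eq_square)
qed

lemma hyp_K_continuous:
  fixes K :: "'a::euclidean_space \<Rightarrow> real"
  assumes "hyp_K K"
  shows "continuous_on UNIV K"
proof -
  obtain DK :: "'a \<Rightarrow> 'a" where "\<And>x. (K has_derivative (\<lambda>v. DK x \<bullet> v)) (at x)"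
    using assms unfolding hyp_K_def by blast
  then show ?thesis
    by (intro continuous_at_imp_continuous_on) (blast intro: has_derivative_continuous)
qed

lemma hyp_K_nonneg: "hyp_K K \<Longrightarrow> 0 \<le> K x"
  unfolding hyp_K_def by blast

lemma hyp_K_quadratic_growth:
  fixes K :: "'a::euclidean_space \<Rightarrow> real"
  assumes "hyp_K K"
  obtains C where "\<And>z. K z \<le> C * (1 + (norm z)\<^sup>2)"
proof -
  obtain DK :: "'a \<Rightarrow> 'a" and HK :: "'a \<Rightarrow> ('a \<Rightarrow>\<^sub>L 'a)" and CK
    where K0: "K 0 = 0" and dK: "\<And>x. (K has_derivative (\<lambda>v. DK x \<bullet> v)) (at x)"
      and dDK: "\<And>x. (DK has_derivative blinfun_apply (HK x)) (at x)"
      and HK: "\<And>x. norm (HK x) \<le> CK"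
    using assms unfolding hyp_K_def by blast
  note remainder = hessian_bound_quadratic_remainder[OF dK dDK HK]
  have CK: "0 \<le> CK" using HK[of 0] norm_ge_zero order_trans by blast
  have "K z \<le> (norm (DK 0) + CK) * (1 + (norm z)\<^sup>2)" for z
  proof -
    have "norm z \<le> 1 + (norm z)\<^sup>2"
    proof (cases "norm z \<le> 1")
      case False
      then have "norm z * 1 \<le> norm z * norm z" by (intro mult_left_mono) auto
      then show ?thesis by (simp add: power2_eq_square)
    qed (simp add: add_increasing2)
    then have "norm (DK 0) * norm z \<le> norm (DK 0) * (1 + (norm z)\<^sup>2)"
      by (simp add: mult_left_mono)
    moreover have "DK 0 \<bullet> z \<le> norm (DK 0) * norm z"
      using Cauchy_Schwarz_ineq2[of "DK 0" z] by linarith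
    moreover have "CK * (norm z)\<^sup>2 \<le> CK * (1 + (norm z)\<^sup>2)"
      using CK by (simp add: mult_left_mono)
    ultimately show ?thesis
      using remainder[of z] K0 by (simp add: distrib_right)
  qed
  then show ?thesis using that by blast
qed

lemma integrable_kernel_second_moment:
  fixes K :: "'a::euclidean_space \<Rightarrow> real"
  assumes K: "continuous_on UNIV K" "\<And>z. 0 \<le> K z" "\<And>z. K z \<le> C * (1 + (norm z)\<^sup>2)"
    and \<rho>: "P2_density \<rho>"
  shows "integrable lborel (\<lambda>y. K (x - y) * \<rho> y)"
proof (rule Bochner_Integration.integrable_bound)
  have \<rho>_nonneg: "\<And>y. 0 \<le> \<rho> y" and int: "integrable lborel \<rho>" "integrable lborel (\<lambda>y. (norm y)\<^sup>2 * \<rho> y)"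
    using \<rho> by (auto simp: P2_density_def)
  show "integrable lborel (\<lambda>y. C * (1 + 2 * (norm x)\<^sup>2) * \<rho> y + 2 * C * ((norm y)\<^sup>2 * \<rho> y))"
    using int by (intro Bochner_Integration.integrable_add integrable_mult_right)
  have "(\<lambda>y. K (x - y)) \<in> borel_measurable lborel"
    by (rule borel_measurable_continuous_on[OF K(1)]) simp
  then show "(\<lambda>y. K (x - y) * \<rho> y) \<in> borel_measurable lborel"
    using borel_measurable_integrable[OF int(1)] by (rule borel_measurable_times)
  have C: "0 \<le> C" using K(2,3)[of 0] by simp
  have "K (x - y) * \<rho> y \<le> C * (1 + 2 * (norm x)\<^sup>2) * \<rho> y + 2 * C * ((norm y)\<^sup>2 * \<rho> y)" for y
  proof -
    have "(norm (x - y))\<^sup>2 \<le> (norm x + norm y)\<^sup>2"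
      using norm_triangle_ineq4[of x y] by (intro power_mono) auto
    also have "\<dots> \<le> 2 * (norm x)\<^sup>2 + 2 * (norm y)\<^sup>2"
      using sum_squares_ge_zero[of "norm x - norm y" 0] by (simp add: power2_eq_square algebra_simps)
    finally have "C * (1 + (norm (x - y))\<^sup>2) \<le> C * (1 + 2 * (norm x)\<^sup>2 + 2 * (norm y)\<^sup>2)"
      using C by (intro mult_left_mono) auto
    then have "K (x - y) \<le> C * (1 + 2 * (norm x)\<^sup>2 + 2 * (norm y)\<^sup>2)"
      using K(3)[of "x - y"] by linarith
    then have "K (x - y) * \<rho> y \<le> C * (1 + 2 * (norm x)\<^sup>2 + 2 * (norm y)\<^sup>2) * \<rho> y"
      using \<rho>_nonneg[of y] by (rule mult_right_mono)
    then show ?thesis by (simp add: algebra_simps)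
  qed
  then show "AE y in lborel. norm (K (x - y) * \<rho> y) \<le> norm (C * (1 + 2 * (norm x)\<^sup>2) * \<rho> y + 2 * C * ((norm y)\<^sup>2 * \<rho> y))"
    using mult_nonneg_nonneg[OF K(2) \<rho>_nonneg] by (intro AE_I2) (smt (verit) real_norm_def)
qed

lemma hyp_K_integrable_conv:
  fixes K :: "'a::euclidean_space \<Rightarrow> real"
  assumes "hyp_K K" and "P2_density \<rho>"
  shows "integrable lborel (\<lambda>y. K (x - y) * \<rho> y)"
proof -
  obtain C where "\<And>z. K z \<le> C * (1 + (norm z)\<^sup>2)"
    using hyp_K_quadratic_growth[OF assms(1)] by blast
  with hyp_K_continuous[OF assms(1)] hyp_K_nonneg[OF assms(1)] assms(2) show ?thesis
    by (intro integrable_kernel_second_moment)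
qed

section \<open>Truncated kernels\<close>

definition truncated_kernel :: "('a::real_normed_vector \<Rightarrow> real) \<Rightarrow> nat \<Rightarrow> 'a \<Rightarrow> real" where
  "truncated_kernel K R z = K z * max 0 (min 1 (real R + 1 - norm z))"

lemma truncated_kernel_nonneg: "(\<And>z. 0 \<le> K z) \<Longrightarrow> 0 \<le> truncated_kernel K R z"
  by (simp add: truncated_kernel_def)

lemma truncated_kernel_le: "(\<And>z. 0 \<le> K z) \<Longrightarrow> truncated_kernel K R z \<le> K z"
  by (simp add: truncated_kernel_def mult_left_le)

lemma truncated_kernel_incseq: "(\<And>z. 0 \<le> K z) \<Longrightarrow> incseq (\<lambda>R. truncated_kernel K R z)"
  by (intro incseq_SucI) (simp add: truncated_kernel_def mult_left_mono)

lemma truncated_kernel_vanishes: "real R + 1 \<le> norm z \<Longrightarrow> truncated_kernel K R z = 0"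
  by (simp add: truncated_kernel_def)

lemma truncated_kernel_tendsto: "(\<lambda>R. truncated_kernel K R z) \<longlonglongrightarrow> K z"
proof (rule tendsto_eventually)
  obtain N where "norm z \<le> real N" using real_arch_simple by blast
  then show "eventually (\<lambda>R. truncated_kernel K R z = K z) sequentially"
    by (intro eventually_sequentiallyI[of N]) (simp add: truncated_kernel_def)
qed

lemma truncated_kernel_continuous:
  "continuous_on UNIV K \<Longrightarrow> continuous_on UNIV (truncated_kernel K R)"
  unfolding truncated_kernel_def by (intro continuous_intros)

lemma truncated_kernel_bounded:
  fixes K :: "'a::euclidean_space \<Rightarrow> real"
  assumes "continuous_on UNIV K"
  obtains M where "\<And>z. \<bar>truncated_kernel K R z\<bar> \<le> M"
proof -
  have "compact (truncated_kernel K R ` cball 0 (real R + 1))"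
    by (intro compact_continuous_image continuous_on_subset[OF truncated_kernel_continuous[OF assms]])
      auto
  then obtain M where M: "\<forall>z\<in>cball 0 (real R + 1). \<bar>truncated_kernel K R z\<bar> \<le> M"
    by (auto dest!: compact_imp_bounded simp: bounded_real)
  have "\<bar>truncated_kernel K R z\<bar> \<le> max M 0" for z
    using M truncated_kernel_vanishes[of R z K] by (cases "z \<in> cball 0 (real R + 1)") force+
  then show ?thesis using that by blast
qed

lemma uniformly_continuous_on_vanishing_outside_cball:
  fixes f :: "'a::euclidean_space \<Rightarrow> real"
  assumes cont: "continuous_on UNIV f" and vanish: "\<And>z. r \<le> norm z \<Longrightarrow> f z = 0"
  shows "uniformly_continuous_on UNIV f"
  unfolding uniformly_continuous_on_def
proof (intro allI impI)
  fix e :: real assume "e > 0"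
  define S where "S = cball (0::'a) (r + 1)"
  have "uniformly_continuous_on S f"
    unfolding S_def by (intro compact_uniformly_continuous continuous_on_subset[OF cont]) auto
  then obtain d where d: "d > 0" "\<And>x x'. x \<in> S \<Longrightarrow> x' \<in> S \<Longrightarrow> dist x' x < d \<Longrightarrow> dist (f x') (f x) < e"
    unfolding uniformly_continuous_on_def using \<open>e > 0\<close> by metis
  show "\<exists>d>0. \<forall>x\<in>UNIV. \<forall>x'\<in>UNIV. dist x' x < d \<longrightarrow> dist (f x') (f x) < e"
  proof (intro exI[of _ "min d 1"] conjI ballI impI)
    fix x x' :: 'a assume close: "dist x' x < min d 1"
    show "dist (f x') (f x) < e"
    proof (cases "x \<in> S \<and> x' \<in> S")
      case False
      have "norm x \<le> norm x' + dist x' x" "norm x' \<le> norm x + dist x' x"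
        by (metis dist_commute dist_norm norm_triangle_sub add.commute)
          (metis dist_norm norm_triangle_sub add.commute)
      with False close have "r \<le> norm x" "r \<le> norm x'" by (auto simp: S_def)
      then show ?thesis using vanish \<open>e > 0\<close> by simp
    qed (use d close in auto)
  qed (use d in auto)
qed

lemma truncated_kernel_uniformly_continuous:
  fixes K :: "'a::euclidean_space \<Rightarrow> real"
  assumes "continuous_on UNIV K"
  shows "uniformly_continuous_on UNIV (truncated_kernel K R)"
  using uniformly_continuous_on_vanishing_outside_cball[OF truncated_kernel_continuous[OF assms]]
    truncated_kernel_vanishes by blast

section \<open>Convolution with bounded kernels\<close>

definition prob_density :: "('a::euclidean_space \<Rightarrow> real) \<Rightarrow> bool" where
  "prob_density \<rho> \<longleftrightarrow> (\<forall>x. 0 \<le> \<rho> x) \<and> integrable lborel \<rho> \<and> (\<integral>x. \<rho> x \<partial>lborel) = 1"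

lemma P2_density_imp_prob_density: "P2_density \<rho> \<Longrightarrow> prob_density \<rho>"
  by (simp add: P2_density_def prob_density_def)

lemma integrable_conv_bounded_kernel:
  fixes k :: "'a::euclidean_space \<Rightarrow> real"
  assumes "continuous_on UNIV k" "\<And>z. \<bar>k z\<bar> \<le> M" "integrable lborel \<rho>"
  shows "integrable lborel (\<lambda>y. k (x - y) * \<rho> y)"
proof -
  have "(\<lambda>y. k (x - y)) \<in> borel_measurable lborel"
    by (rule borel_measurable_continuous_on[OF assms(1)]) simp
  then have "integrable lborel (\<lambda>y. \<rho> y * k (x - y))"
    using assms(2,3) by (intro integrable_mult_bounded)
  then show ?thesis by (simp add: mult.commute)
qed

lemma conv_abs_le:
  fixes k :: "'a::euclidean_space \<Rightarrow> real"
  assumes k: "continuous_on UNIV k" "\<And>z. \<bar>k z\<bar> \<le> M" and \<rho>: "prob_density \<rho>"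
  shows "\<bar>conv k \<rho> x\<bar> \<le> M"
proof -
  have \<rho>_nonneg: "\<And>y. 0 \<le> \<rho> y" and int: "integrable lborel \<rho>" and mass: "(\<integral>y. \<rho> y \<partial>lborel) = 1"
    using \<rho> by (auto simp: prob_density_def)
  have "\<bar>conv k \<rho> x\<bar> \<le> (\<integral>y. \<bar>k (x - y) * \<rho> y\<bar> \<partial>lborel)"
    unfolding conv_def by (rule integral_abs_bound)
  also have "\<dots> \<le> (\<integral>y. M * \<rho> y \<partial>lborel)"
  proof (rule integral_mono)
    show "integrable lborel (\<lambda>y. \<bar>k (x - y) * \<rho> y\<bar>)"
      by (rule integrable_abs[OF integrable_conv_bounded_kernel[OF k int]])
    show "\<bar>k (x - y) * \<rho> y\<bar> \<le> M * \<rho> y" for y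
      using k(2)[of "x - y"] \<rho>_nonneg[of y] by (simp add: abs_mult mult_right_mono)
  qed (use int in simp)
  finally show ?thesis by (simp add: mass)
qed

lemma conv_equicontinuous:
  fixes k :: "'a::euclidean_space \<Rightarrow> real"
  assumes k: "uniformly_continuous_on UNIV k" "\<And>z. \<bar>k z\<bar> \<le> M" and "e > 0"
  obtains d where "d > 0"
    "\<And>\<rho> x x'. prob_density \<rho> \<Longrightarrow> dist x x' < d \<Longrightarrow> \<bar>conv k \<rho> x - conv k \<rho> x'\<bar> \<le> e"
proof -
  obtain d where d: "d > 0" "\<forall>z z'. dist z' z < d \<longrightarrow> dist (k z') (k z) < e"
    using k(1) \<open>e > 0\<close> unfolding uniformly_continuous_on_def by auto
  have "\<bar>conv k \<rho> x - conv k \<rho> x'\<bar> \<le> e" if \<rho>: "prob_density \<rho>" and "dist x x' < d" for \<rho> x x'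
  proof -
    have \<rho>_nonneg: "\<And>y. 0 \<le> \<rho> y" and int: "integrable lborel \<rho>" and mass: "(\<integral>y. \<rho> y \<partial>lborel) = 1"
      using \<rho> by (auto simp: prob_density_def)
    note int_k = integrable_conv_bounded_kernel[OF uniformly_continuous_imp_continuous[OF k(1)] k(2) int]
    have "conv k \<rho> x - conv k \<rho> x' = (\<integral>y. k (x - y) * \<rho> y - k (x' - y) * \<rho> y \<partial>lborel)"
      unfolding conv_def by (rule Bochner_Integration.integral_diff[symmetric, OF int_k int_k])
    also have "\<bar>\<dots>\<bar> \<le> (\<integral>y. \<bar>k (x - y) * \<rho> y - k (x' - y) * \<rho> y\<bar> \<partial>lborel)"
      by (rule integral_abs_bound)
    also have "\<dots> \<le> (\<integral>y. e * \<rho> y \<partial>lborel)"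
    proof (rule integral_mono)
      show "integrable lborel (\<lambda>y. \<bar>k (x - y) * \<rho> y - k (x' - y) * \<rho> y\<bar>)"
        by (rule integrable_abs[OF Bochner_Integration.integrable_diff[OF int_k int_k]])
      show "integrable lborel (\<lambda>y. e * \<rho> y)"
        by (rule integrable_mult_right[OF int])
      fix y
      have "dist (x' - y) (x - y) < d"
        using \<open>dist x x' < d\<close> by (simp add: dist_norm norm_minus_commute)
      then have "\<bar>k (x' - y) - k (x - y)\<bar> < e"
        using d(2) by (simp add: dist_real_def)
      then have "\<bar>k (x - y) - k (x' - y)\<bar> \<le> e"
        by (simp add: abs_minus_commute)
      then have "\<bar>k (x - y) - k (x' - y)\<bar> * \<rho> y \<le> e * \<rho> y"
        using \<rho>_nonneg[of y] by (rule mult_right_mono)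
      then show "\<bar>k (x - y) * \<rho> y - k (x' - y) * \<rho> y\<bar> \<le> e * \<rho> y"
        using \<rho>_nonneg[of y] by (simp add: left_diff_distrib[symmetric] abs_mult)
    qed
    finally show ?thesis by (simp add: mass)
  qed
  then show ?thesis using that d(1) by blast
qed

lemma conv_continuous:
  fixes k :: "'a::euclidean_space \<Rightarrow> real"
  assumes k: "uniformly_continuous_on UNIV k" "\<And>z. \<bar>k z\<bar> \<le> M" and \<rho>: "prob_density \<rho>"
  shows "continuous_on UNIV (conv k \<rho>)"
proof (rule uniformly_continuous_imp_continuous)
  show "uniformly_continuous_on UNIV (conv k \<rho>)"
    unfolding uniformly_continuous_on_def
  proof (intro allI impI)
    fix e :: real assume "e > 0"
    then obtain d where d: "d > 0"
      "\<And>\<rho> x x'. prob_density \<rho> \<Longrightarrow> dist x x' < d \<Longrightarrow> \<bar>conv k \<rho> x - conv k \<rho> x'\<bar> \<le> e / 2"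
      using conv_equicontinuous[OF k half_gt_zero] by blast
    have "dist (conv k \<rho> x') (conv k \<rho> x) < e" if "dist x' x < d" for x x'
      using d(2)[OF \<rho> that] \<open>e > 0\<close> by (simp add: dist_real_def)
    with d(1) show "\<exists>d>0. \<forall>x\<in>UNIV. \<forall>x'\<in>UNIV. dist x' x < d \<longrightarrow> dist (conv k \<rho> x') (conv k \<rho> x) < e"
      by blast
  qed
qed

lemma weakL1_conv_imp_conv_tendsto:
  fixes k :: "'a::euclidean_space \<Rightarrow> real"
  assumes "weakL1_conv \<rho>s \<rho>" "continuous_on UNIV k" "\<And>z. \<bar>k z\<bar> \<le> M"
  shows "(\<lambda>n. conv k (\<rho>s n) x) \<longlonglongrightarrow> conv k \<rho> x"
proof -
  have "(\<lambda>y. k (x - y)) \<in> borel_measurable lborel"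
    by (rule borel_measurable_continuous_on[OF assms(2)]) simp
  from weakL1_conv_tendsto_integral[OF assms(1) this assms(3)] show ?thesis
    by (simp add: conv_def mult.commute)
qed

lemma conv_nonneg: "(\<And>z. 0 \<le> K z) \<Longrightarrow> (\<And>y. 0 \<le> \<rho> y) \<Longrightarrow> 0 \<le> conv K \<rho> x"
  unfolding conv_def by (intro integral_nonneg_AE AE_I2 mult_nonneg_nonneg)

lemma integrable_truncated_kernel_conv:
  fixes K :: "'a::euclidean_space \<Rightarrow> real"
  assumes "continuous_on UNIV K" "integrable lborel \<rho>"
  shows "integrable lborel (\<lambda>y. truncated_kernel K R (x - y) * \<rho> y)"
  using truncated_kernel_bounded[OF assms(1)]
  by (metis integrable_conv_bounded_kernel[OF truncated_kernel_continuous[OF assms(1)] _ assms(2)])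

lemma conv_truncated_kernel_incseq:
  fixes K :: "'a::euclidean_space \<Rightarrow> real"
  assumes "continuous_on UNIV K" "\<And>z. 0 \<le> K z" "integrable lborel \<rho>" "\<And>y. 0 \<le> \<rho> y"
  shows "incseq (\<lambda>R. conv (truncated_kernel K R) \<rho> x)"
  unfolding conv_def
  by (intro incseq_SucI integral_mono integrable_truncated_kernel_conv assms mult_right_mono
      incseq_SucD[OF truncated_kernel_incseq])

lemma conv_truncated_kernel_tendsto:
  fixes K :: "'a::euclidean_space \<Rightarrow> real"
  assumes "continuous_on UNIV K" "\<And>z. 0 \<le> K z" "integrable lborel \<rho>" "\<And>y. 0 \<le> \<rho> y"
    and int: "integrable lborel (\<lambda>y. K (x - y) * \<rho> y)"
  shows "(\<lambda>R. conv (truncated_kernel K R) \<rho> x) \<longlonglongrightarrow> conv K \<rho> x"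
  unfolding conv_def
proof (rule integral_dominated_convergence[OF _ _ int])
  show "(\<lambda>y. K (x - y) * \<rho> y) \<in> borel_measurable lborel"
    using int by (rule borel_measurable_integrable)
  show "(\<lambda>y. truncated_kernel K R (x - y) * \<rho> y) \<in> borel_measurable lborel" for R
    using integrable_truncated_kernel_conv[OF assms(1,3)] by (rule borel_measurable_integrable)
  show "AE y in lborel. (\<lambda>R. truncated_kernel K R (x - y) * \<rho> y) \<longlonglongrightarrow> K (x - y) * \<rho> y"
    by (intro AE_I2 tendsto_mult_right truncated_kernel_tendsto)
  show "AE y in lborel. norm (truncated_kernel K R (x - y) * \<rho> y) \<le> K (x - y) * \<rho> y" for R
    using assms(2,4) truncated_kernel_nonneg[of K] truncated_kernel_le[of K]
    by (intro AE_I2) (simp add: abs_mult mult_right_mono)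
qed

lemma conv_truncated_kernel_bounded:
  fixes K :: "'a::euclidean_space \<Rightarrow> real"
  assumes "continuous_on UNIV K"
  obtains M where "\<And>\<rho> x. prob_density \<rho> \<Longrightarrow> \<bar>conv (truncated_kernel K R) \<rho> x\<bar> \<le> M"
proof -
  obtain M where "\<And>z. \<bar>truncated_kernel K R z\<bar> \<le> M"
    using truncated_kernel_bounded[OF assms] by blast
  with conv_abs_le[OF truncated_kernel_continuous[OF assms]] that show ?thesis by blast
qed

lemma conv_truncated_kernel_measurable:
  fixes K :: "'a::euclidean_space \<Rightarrow> real"
  assumes "continuous_on UNIV K" and "prob_density \<rho>"
  shows "conv (truncated_kernel K R) \<rho> \<in> borel_measurable lborel"
proof -
  obtain M where "\<And>z. \<bar>truncated_kernel K R z\<bar> \<le> M"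
    using truncated_kernel_bounded[OF assms(1)] by blast
  then have "continuous_on UNIV (conv (truncated_kernel K R) \<rho>)"
    by (rule conv_continuous[OF truncated_kernel_uniformly_continuous[OF assms(1)] _ assms(2)])
  then show ?thesis using borel_measurable_continuous_onI by simp
qed

lemma conv_measurable:
  fixes K :: "'a::euclidean_space \<Rightarrow> real"
  assumes K: "continuous_on UNIV K" "\<And>z. 0 \<le> K z" and \<rho>: "prob_density \<rho>"
    and int: "\<And>x. integrable lborel (\<lambda>y. K (x - y) * \<rho> y)"
  shows "conv K \<rho> \<in> borel_measurable lborel"
proof (rule borel_measurable_LIMSEQ_real)
  show "(\<lambda>R. conv (truncated_kernel K R) \<rho> x) \<longlonglongrightarrow> conv K \<rho> x" for x
    using conv_truncated_kernel_tendsto[OF K _ _ int] \<rho> by (auto simp: prob_density_def)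
  show "conv (truncated_kernel K R) \<rho> \<in> borel_measurable lborel" for R
    by (rule conv_truncated_kernel_measurable[OF K(1) \<rho>])
qed

section \<open>Lower semicontinuity of the interaction energy\<close>

lemma uniform_limit_compact_equicontinuous:
  fixes f :: "nat \<Rightarrow> 'a::metric_space \<Rightarrow> real"
  assumes S: "compact S"
    and equi: "\<And>e. e > 0 \<Longrightarrow> \<exists>d>0. \<forall>n x y. dist x y < d \<longrightarrow> \<bar>f n x - f n y\<bar> \<le> e"
    and lim: "\<And>x. (\<lambda>n. f n x) \<longlonglongrightarrow> g x"
  shows "uniform_limit S f g sequentially"
proof (rule uniform_limitI)
  fix e :: real assume "e > 0"
  then obtain d where d: "d > 0" "\<And>n x y. dist x y < d \<Longrightarrow> \<bar>f n x - f n y\<bar> \<le> e / 3"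
    using equi[of "e / 3"] by auto
  have g_mod: "\<bar>g x - g y\<bar> \<le> e / 3" if "dist x y < d" for x y
  proof (rule tendsto_upperbound)
    show "(\<lambda>n. \<bar>f n x - f n y\<bar>) \<longlonglongrightarrow> \<bar>g x - g y\<bar>"
      by (intro tendsto_intros lim)
  qed (use d that in auto)
  obtain C where C: "C \<subseteq> S" "finite C" "S \<subseteq> (\<Union>c\<in>C. ball c d)"
    using compactE_image[OF S, of S "\<lambda>c. ball c d"] d(1) by force
  have "\<forall>\<^sub>F n in sequentially. \<forall>c\<in>C. dist (f n c) (g c) < e / 3"
    using C(2) \<open>e > 0\<close> by (intro eventually_ball_finite ballI tendstoD lim) auto
  then show "\<forall>\<^sub>F n in sequentially. \<forall>x\<in>S. dist (f n x) (g x) < e"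
  proof eventually_elim
    case (elim n)
    show "\<forall>x\<in>S. dist (f n x) (g x) < e"
    proof
      fix x assume "x \<in> S"
      then obtain c where "c \<in> C" "dist c x < d" using C(3) by auto
      then have "\<bar>f n x - f n c\<bar> \<le> e / 3" "\<bar>f n c - g c\<bar> < e / 3" "\<bar>g c - g x\<bar> \<le> e / 3"
        using d(2)[of x c n] g_mod[of c x] elim by (auto simp: dist_real_def dist_commute)
      then show "dist (f n x) (g x) < e" unfolding dist_real_def by arith
    qed
  qed
qed

lemma integral_outside_cball_tendsto_zero:
  fixes \<rho> :: "'a::euclidean_space \<Rightarrow> real"
  assumes "integrable lborel \<rho>"
  shows "(\<lambda>N. \<integral>x. \<rho> x * indicator (- cball 0 (real N)) x \<partial>lborel) \<longlonglongrightarrow> 0"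
proof -
  have "(\<lambda>N. \<integral>x. \<rho> x * indicator (- cball 0 (real N)) x \<partial>lborel) \<longlonglongrightarrow> (\<integral>x. 0 \<partial>(lborel :: 'a measure))"
  proof (rule integral_dominated_convergence[where w = "\<lambda>x. norm (\<rho> x)"])
    show "AE x in lborel. (\<lambda>N. \<rho> x * indicator (- cball 0 (real N)) x) \<longlonglongrightarrow> 0"
    proof (intro AE_I2 tendsto_eventually)
      fix x :: 'a
      obtain N where "norm x \<le> real N" using real_arch_simple by blast
      then show "eventually (\<lambda>N. \<rho> x * indicator (- cball 0 (real N)) x = 0) sequentially"
        by (intro eventually_sequentiallyI[of N]) (auto simp: indicator_def)
    qed
  qed (use assms in \<open>auto simp: indicator_def borel_measurable_integrable\<close>)
  then show ?thesis by simp
qed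

lemma tendsto_zero_if_eventually_abs_le:
  fixes X :: "'a \<Rightarrow> real"
  assumes C: "0 < C" and small: "\<And>e. e > 0 \<Longrightarrow> \<forall>\<^sub>F n in F. \<bar>X n\<bar> \<le> C * e"
  shows "(X \<longlongrightarrow> 0) F"
proof (rule tendstoI)
  fix \<epsilon> :: real assume "\<epsilon> > 0"
  then have "\<epsilon> / 2 / C > 0" and "C * (\<epsilon> / 2 / C) < \<epsilon>"
    using C by simp_all
  with small[OF this(1)] show "\<forall>\<^sub>F n in F. dist (X n) 0 < \<epsilon>"
    by (auto elim: eventually_mono)
qed

lemma abs_integral_density_le:
  fixes f \<rho> :: "'a::euclidean_space \<Rightarrow> real"
  assumes \<rho>: "prob_density \<rho>" and f: "f \<in> borel_measurable lborel" and C: "C \<in> sets lborel"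
    and bound: "\<And>x. \<bar>f x\<bar> \<le> B" and small: "\<And>x. x \<notin> C \<Longrightarrow> \<bar>f x\<bar> \<le> e" and "0 \<le> e"
  shows "\<bar>\<integral>x. \<rho> x * f x \<partial>lborel\<bar> \<le> e + B * (\<integral>x. \<rho> x * indicator C x \<partial>lborel)"
proof -
  have \<rho>_nonneg: "\<And>x. 0 \<le> \<rho> x" and int: "integrable lborel \<rho>" and mass: "(\<integral>x. \<rho> x \<partial>lborel) = 1"
    using \<rho> by (auto simp: prob_density_def)
  have int_C: "integrable lborel (\<lambda>x. \<rho> x * indicator C x)"
    using int C by (intro integrable_mult_bounded[where B = 1]) (auto simp: indicator_def)
  have "\<bar>\<integral>x. \<rho> x * f x \<partial>lborel\<bar> \<le> (\<integral>x. \<bar>\<rho> x * f x\<bar> \<partial>lborel)"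
    by (rule integral_abs_bound)
  also have "\<dots> \<le> (\<integral>x. e * \<rho> x + B * (\<rho> x * indicator C x) \<partial>lborel)"
  proof (rule integral_mono)
    show "integrable lborel (\<lambda>x. \<bar>\<rho> x * f x\<bar>)"
      using integrable_mult_bounded[OF int f bound] by (rule integrable_abs)
    show "integrable lborel (\<lambda>x. e * \<rho> x + B * (\<rho> x * indicator C x))"
      using int int_C by (intro Bochner_Integration.integrable_add integrable_mult_right)
    fix x
    have "\<bar>f x\<bar> \<le> e + B * indicator C x"
      using bound[of x] small[of x] \<open>0 \<le> e\<close> by (cases "x \<in> C") auto
    then have "\<rho> x * \<bar>f x\<bar> \<le> \<rho> x * (e + B * indicator C x)"
      using \<rho>_nonneg by (rule mult_left_mono)
    then show "\<bar>\<rho> x * f x\<bar> \<le> e * \<rho> x + B * (\<rho> x * indicator C x)"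
      using \<rho>_nonneg[of x] by (simp add: abs_mult algebra_simps)
  qed
  also have "\<dots> = e * (\<integral>x. \<rho> x \<partial>lborel) + B * (\<integral>x. \<rho> x * indicator C x \<partial>lborel)"
    using int int_C by (simp only: Bochner_Integration.integral_add integrable_mult_right integral_mult_right_zero)
  finally show ?thesis by (simp add: mass)
qed

lemma weakL1_conv_integral_equicontinuous_diff_small:
  fixes \<psi>s :: "nat \<Rightarrow> 'a::euclidean_space \<Rightarrow> real" and \<rho>s :: "nat \<Rightarrow> 'a \<Rightarrow> real"
  assumes bound: "\<And>n x. \<bar>\<psi>s n x\<bar> \<le> M" "\<And>x. \<bar>\<psi> x\<bar> \<le> M"
    and equi: "\<And>e. e > 0 \<Longrightarrow> \<exists>d>0. \<forall>n x y. dist x y < d \<longrightarrow> \<bar>\<psi>s n x - \<psi>s n y\<bar> \<le> e"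
    and lim: "\<And>x. (\<lambda>n. \<psi>s n x) \<longlonglongrightarrow> \<psi> x"
    and meas: "\<And>n. \<psi>s n \<in> borel_measurable lborel" "\<psi> \<in> borel_measurable lborel"
    and dens: "\<And>n. prob_density (\<rho>s n)" "prob_density \<rho>"
    and weak: "weakL1_conv \<rho>s \<rho>"
    and "e > 0"
  shows "\<forall>\<^sub>F n in sequentially.
    \<bar>(\<integral>x. \<rho>s n x * \<psi>s n x \<partial>lborel) - (\<integral>x. \<rho>s n x * \<psi> x \<partial>lborel)\<bar> \<le> (1 + 2 * M) * e"
proof -
  \<comment> \<open>Uniform convergence on a large ball, and tightness of the weakly convergent \<rho>s outside it.\<close>
  have "integrable lborel \<rho>" using dens(2) by (simp add: prob_density_def)
  from order_tendstoD(2)[OF integral_outside_cball_tendsto_zero[OF this] \<open>e > 0\<close>]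
  obtain N :: nat where N: "(\<integral>x. \<rho> x * indicator (- cball 0 (real N)) x \<partial>lborel) < e"
    unfolding eventually_sequentially by blast
  define C where "C = - cball (0::'a) (real N)"
  have C: "C \<in> sets lborel" "(\<lambda>x. indicator C x :: real) \<in> borel_measurable lborel"
    by (simp_all add: C_def)
  have "\<forall>\<^sub>F n in sequentially. (\<integral>x. \<rho>s n x * indicator C x \<partial>lborel) < e"
    using weakL1_conv_tendsto_integral[OF weak C(2), of 1] N
    by (intro order_tendstoD(2)) (auto simp: C_def indicator_def)
  moreover have "\<forall>\<^sub>F n in sequentially. \<forall>x\<in>cball 0 (real N). dist (\<psi>s n x) (\<psi> x) < e"
    using uniform_limit_compact_equicontinuous[OF compact_cball equi lim] \<open>e > 0\<close>
    by (rule uniform_limitD)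
  ultimately show ?thesis
  proof eventually_elim
    case (elim n)
    have "integrable lborel (\<rho>s n)" using dens(1)[of n] by (simp add: prob_density_def)
    then have int: "integrable lborel (\<lambda>x. \<rho>s n x * \<psi>s n x)" "integrable lborel (\<lambda>x. \<rho>s n x * \<psi> x)"
      using integrable_mult_bounded meas bound by blast+
    have "(\<integral>x. \<rho>s n x * \<psi>s n x \<partial>lborel) - (\<integral>x. \<rho>s n x * \<psi> x \<partial>lborel)
        = (\<integral>x. \<rho>s n x * (\<psi>s n x - \<psi> x) \<partial>lborel)"
      using int by (simp add: right_diff_distrib)
    also have "\<bar>\<dots>\<bar> \<le> e + 2 * M * (\<integral>x. \<rho>s n x * indicator C x \<partial>lborel)"
    proof (rule abs_integral_density_le[OF dens(1) _ C(1)])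
      show "(\<lambda>x. \<psi>s n x - \<psi> x) \<in> borel_measurable lborel"
        using meas by simp
      show "\<bar>\<psi>s n x - \<psi> x\<bar> \<le> 2 * M" for x
        using bound(1)[of n x] bound(2)[of x] by simp
      show "\<bar>\<psi>s n x - \<psi> x\<bar> \<le> e" if "x \<notin> C" for x
        using elim(2) that by (force simp: C_def dist_real_def)
    qed (use \<open>e > 0\<close> in simp)
    also have "\<dots> \<le> (1 + 2 * M) * e"
      using mult_left_mono[OF less_imp_le[OF elim(1)], of "2 * M"] bound(1)[of 0 0]
      by (simp add: algebra_simps)
    finally show ?case .
  qed
qed

lemma weakL1_conv_integral_tendsto_equicontinuous:
  fixes \<psi>s :: "nat \<Rightarrow> 'a::euclidean_space \<Rightarrow> real" and \<rho>s :: "nat \<Rightarrow> 'a \<Rightarrow> real"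
  assumes bound: "\<And>n x. \<bar>\<psi>s n x\<bar> \<le> M"
    and equi: "\<And>e. e > 0 \<Longrightarrow> \<exists>d>0. \<forall>n x y. dist x y < d \<longrightarrow> \<bar>\<psi>s n x - \<psi>s n y\<bar> \<le> e"
    and lim: "\<And>x. (\<lambda>n. \<psi>s n x) \<longlonglongrightarrow> \<psi> x"
    and meas: "\<And>n. \<psi>s n \<in> borel_measurable lborel"
    and dens: "\<And>n. prob_density (\<rho>s n)" "prob_density \<rho>"
    and weak: "weakL1_conv \<rho>s \<rho>"
  shows "(\<lambda>n. \<integral>x. \<rho>s n x * \<psi>s n x \<partial>lborel) \<longlonglongrightarrow> (\<integral>x. \<rho> x * \<psi> x \<partial>lborel)"
proof -
  have \<psi>_bound: "\<bar>\<psi> x\<bar> \<le> M" for x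
    using bound by (intro tendsto_upperbound[OF tendsto_rabs[OF lim]]) auto
  have \<psi>_meas: "\<psi> \<in> borel_measurable lborel"
    using lim meas by (rule borel_measurable_LIMSEQ_real)
  have "(\<lambda>n. \<integral>x. \<rho>s n x * \<psi> x \<partial>lborel) \<longlonglongrightarrow> (\<integral>x. \<rho> x * \<psi> x \<partial>lborel)"
    using weak \<psi>_meas \<psi>_bound by (rule weakL1_conv_tendsto_integral)
  moreover have "(\<lambda>n. (\<integral>x. \<rho>s n x * \<psi>s n x \<partial>lborel) - (\<integral>x. \<rho>s n x * \<psi> x \<partial>lborel)) \<longlonglongrightarrow> 0"
  proof (rule tendsto_zero_if_eventually_abs_le)
    show "0 < 1 + 2 * M" using bound[of 0 0] by linarith
  qed (rule weakL1_conv_integral_equicontinuous_diff_small[OF bound \<psi>_bound equi lim meas \<psi>_meas dens weak])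
  ultimately have "(\<lambda>n. (\<integral>x. \<rho>s n x * \<psi> x \<partial>lborel) + ((\<integral>x. \<rho>s n x * \<psi>s n x \<partial>lborel)
      - (\<integral>x. \<rho>s n x * \<psi> x \<partial>lborel))) \<longlonglongrightarrow> (\<integral>x. \<rho> x * \<psi> x \<partial>lborel) + 0"
    by (rule tendsto_add)
  then show ?thesis by simp
qed

lemma weakL1_conv_integral_conv_truncated_kernel_tendsto:
  fixes K :: "'a::euclidean_space \<Rightarrow> real" and u v :: "'a \<Rightarrow> real" and us vs :: "nat \<Rightarrow> 'a \<Rightarrow> real"
  assumes K: "continuous_on UNIV K"
    and dens: "prob_density u" "\<And>n. prob_density (us n)" "\<And>n. prob_density (vs n)"
    and weak: "weakL1_conv us u" "weakL1_conv vs v"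
  shows "(\<lambda>n. \<integral>x. us n x * conv (truncated_kernel K R) (vs n) x \<partial>lborel)
    \<longlonglongrightarrow> (\<integral>x. u x * conv (truncated_kernel K R) v x \<partial>lborel)"
proof -
  obtain M where M: "\<And>z. \<bar>truncated_kernel K R z\<bar> \<le> M"
    using truncated_kernel_bounded[OF K] by blast
  obtain M' where M': "\<And>\<rho> x. prob_density \<rho> \<Longrightarrow> \<bar>conv (truncated_kernel K R) \<rho> x\<bar> \<le> M'"
    using conv_truncated_kernel_bounded[OF K] by blast
  show ?thesis
  proof (rule weakL1_conv_integral_tendsto_equicontinuous[OF M'[OF dens(3)] _ _ _ dens(2,1) weak(1)])
    show "\<exists>d>0. \<forall>n x y. dist x y < d \<longrightarrow>
        \<bar>conv (truncated_kernel K R) (vs n) x - conv (truncated_kernel K R) (vs n) y\<bar> \<le> e"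
      if "e > 0" for e
      using conv_equicontinuous[OF truncated_kernel_uniformly_continuous[OF K] M that] dens(3) by metis
    show "(\<lambda>n. conv (truncated_kernel K R) (vs n) x) \<longlonglongrightarrow> conv (truncated_kernel K R) v x" for x
      by (rule weakL1_conv_imp_conv_tendsto[OF weak(2) truncated_kernel_continuous[OF K] M])
    show "conv (truncated_kernel K R) (vs n) \<in> borel_measurable lborel" for n
      by (rule conv_truncated_kernel_measurable[OF K dens(3)])
  qed
qed

lemma weakL1_lsc_interaction:
  fixes K :: "'a::euclidean_space \<Rightarrow> real" and u v :: "'a \<Rightarrow> real" and us vs :: "nat \<Rightarrow> 'a \<Rightarrow> real"
  assumes K: "continuous_on UNIV K" "\<And>z. 0 \<le> K z"
    and dens: "prob_density u" "prob_density v" "\<And>n. prob_density (us n)" "\<And>n. prob_density (vs n)"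
    and int: "\<And>x. integrable lborel (\<lambda>y. K (x - y) * v y)"
      "\<And>n x. integrable lborel (\<lambda>y. K (x - y) * vs n y)"
    and weak: "weakL1_conv us u" "weakL1_conv vs v"
  shows "enn2ereal (\<integral>\<^sup>+x. ennreal (u x * conv K v x) \<partial>lborel)
    \<le> liminf (\<lambda>n. enn2ereal (\<integral>\<^sup>+x. ennreal (us n x * conv K (vs n) x) \<partial>lborel))"
proof -
  have dens_facts: "\<And>x. 0 \<le> \<rho> x" "integrable lborel \<rho>" if "prob_density \<rho>" for \<rho> :: "'a \<Rightarrow> real"
    using that by (auto simp: prob_density_def)
  note u = dens_facts[OF dens(1)] and v = dens_facts[OF dens(2)]
  note us = dens_facts[OF dens(3)] and vs = dens_facts[OF dens(4)]
  define \<psi> where "\<psi> R \<rho> = conv (truncated_kernel K R) \<rho>" for R and \<rho> :: "'a \<Rightarrow> real"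
  have \<psi>_le: "\<psi> R \<rho> x \<le> conv K \<rho> x"
    if "prob_density \<rho>" "integrable lborel (\<lambda>y. K (x - y) * \<rho> y)" for R \<rho> x
    unfolding \<psi>_def
    using incseq_le[OF conv_truncated_kernel_incseq[OF K dens_facts(2,1)[OF that(1)]]
        conv_truncated_kernel_tendsto[OF K dens_facts(2,1)[OF that(1)] that(2)]] .
  have int_\<psi>: "integrable lborel (\<lambda>x. w x * \<psi> R \<rho> x)"
    if "prob_density \<rho>" "integrable lborel w" for R \<rho> w
    using conv_truncated_kernel_bounded[OF K(1)] that unfolding \<psi>_def
    by (metis integrable_mult_bounded conv_truncated_kernel_measurable[OF K(1)])
  show ?thesis
  proof (rule nn_integral_le_liminf_of_approx[where gR = "\<lambda>R x. u x * \<psi> R v x"])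
    show "(\<lambda>x. u x * \<psi> R v x) \<in> borel_measurable lborel" for R
      using int_\<psi>[OF dens(2) u(2)] by (rule borel_measurable_integrable)
    show "0 \<le> u x * \<psi> R v x" for R x
      unfolding \<psi>_def using u v truncated_kernel_nonneg[of K] K(2)
      by (intro mult_nonneg_nonneg conv_nonneg) auto
    show "incseq (\<lambda>R. u x * \<psi> R v x)" for x
      using conv_truncated_kernel_incseq[OF K v(2,1)] u(1) unfolding \<psi>_def incseq_def
      by (simp add: mult_left_mono)
    show "(\<lambda>R. u x * \<psi> R v x) \<longlonglongrightarrow> u x * conv K v x" for x
      unfolding \<psi>_def by (intro tendsto_mult_left conv_truncated_kernel_tendsto K v int(1))
    show "integrable lborel (\<lambda>x. u x * \<psi> R v x)" for R
      by (rule int_\<psi>[OF dens(2) u(2)])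
    show "ereal (\<integral>x. u x * \<psi> R v x \<partial>lborel)
        \<le> liminf (\<lambda>n. enn2ereal (\<integral>\<^sup>+x. ennreal (us n x * conv K (vs n) x) \<partial>lborel))" for R
    proof (rule ereal_le_liminf_of_tendsto_lower[OF integral_le_nn_integral])
      show "integrable lborel (\<lambda>x. us n x * \<psi> R (vs n) x)" for n
        by (rule int_\<psi>[OF dens(4) us(2)])
      show "us n x * \<psi> R (vs n) x \<le> us n x * conv K (vs n) x" for n x
        using \<psi>_le[OF dens(4) int(2)] us(1) by (rule mult_left_mono)
      show "0 \<le> us n x * conv K (vs n) x" for n x
        using us vs K(2) by (intro mult_nonneg_nonneg conv_nonneg) auto
      show "(\<lambda>n. \<integral>x. us n x * \<psi> R (vs n) x \<partial>lborel) \<longlonglongrightarrow> (\<integral>x. u x * \<psi> R v x \<partial>lborel)"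
        unfolding \<psi>_def
        by (rule weakL1_conv_integral_conv_truncated_kernel_tendsto[OF K(1) dens(1,3,4) weak])
    qed
  qed
qed

lemma if_integrable_eq_nn_integral:
  fixes f :: "'a \<Rightarrow> real"
  assumes f: "f \<in> borel_measurable M" and nonneg: "\<And>x. 0 \<le> f x"
  shows "(if integrable M f then ereal (\<integral>x. f x \<partial>M) else \<infinity>) = enn2ereal (\<integral>\<^sup>+x. ennreal (f x) \<partial>M)"
proof (cases "integrable M f")
  case True
  then show ?thesis
    using nonneg by (simp add: nn_integral_eq_integral integral_nonneg_AE)
next
  case False
  have "(\<integral>\<^sup>+x. ennreal (f x) \<partial>M) = \<infinity>"
  proof (rule ccontr)
    assume "(\<integral>\<^sup>+x. ennreal (f x) \<partial>M) \<noteq> \<infinity>"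
    then have "integrable M f"
      using f nonneg by (intro integrableI_nonneg) (auto simp: less_top)
    with False show False by simp
  qed
  then show ?thesis using False by simp
qed

lemma energy_eq_nn_integrals:
  fixes K :: "'a::euclidean_space \<Rightarrow> real"
  assumes \<Phi>_cont: "continuous_on quad (local_density \<epsilon> F h)"
    and \<Phi>_nonneg: "\<And>p. p \<in> quad \<Longrightarrow> 0 \<le> local_density \<epsilon> F h p"
    and K: "continuous_on UNIV K" "\<And>z. 0 \<le> K z"
    and dens: "prob_density u" "prob_density v"
    and int: "\<And>x. integrable lborel (\<lambda>y. K (x - y) * v y)"
  shows "energy \<epsilon> F h K u v = enn2ereal (\<integral>\<^sup>+x. ennreal (local_density \<epsilon> F h (u x, v x)) \<partial>lborel)
      + enn2ereal (\<integral>\<^sup>+x. ennreal (u x * conv K v x) \<partial>lborel)"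
proof -
  have nonneg: "\<And>x. 0 \<le> u x" "\<And>x. 0 \<le> v x"
    and meas: "u \<in> borel_measurable lborel" "v \<in> borel_measurable lborel"
    using dens by (auto simp: prob_density_def intro: borel_measurable_integrable)
  define \<Phi> where "\<Phi> x = local_density \<epsilon> F h (u x, v x)" for x
  define I where "I x = u x * conv K v x" for x
  have \<Phi>: "\<Phi> \<in> borel_measurable lborel" "\<And>x. 0 \<le> \<Phi> x"
    unfolding \<Phi>_def using borel_measurable_continuous_on_quad_comp[OF \<Phi>_cont meas] nonneg \<Phi>_nonneg
    by (auto simp: quad_def)
  have I: "I \<in> borel_measurable lborel" "\<And>x. 0 \<le> I x"
    unfolding I_def using meas(1) conv_measurable[OF K dens(2) int] nonneg(1)
      conv_nonneg[of K v, OF K(2) nonneg(2)]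
    by auto
  have "energy \<epsilon> F h K u v = (if integrable lborel (\<lambda>x. \<Phi> x + I x)
      then ereal (\<integral>x. \<Phi> x + I x \<partial>lborel) else \<infinity>)"
    unfolding energy_def Let_def \<Phi>_def I_def local_density_def by simp
  also have "\<dots> = enn2ereal (\<integral>\<^sup>+x. ennreal (\<Phi> x + I x) \<partial>lborel)"
    using \<Phi> I by (intro if_integrable_eq_nn_integral) auto
  also have "(\<integral>\<^sup>+x. ennreal (\<Phi> x + I x) \<partial>lborel)
      = (\<integral>\<^sup>+x. ennreal (\<Phi> x) \<partial>lborel) + (\<integral>\<^sup>+x. ennreal (I x) \<partial>lborel)"
    using \<Phi> I by (subst nn_integral_add[symmetric]) (auto intro!: nn_integral_cong simp: ennreal_plus)
  finally show ?thesis
    by (simp add: \<Phi>_def I_def plus_ennreal.rep_eq)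
qed

lemma ereal_add_le_liminf_add:
  fixes a b :: ereal and f g :: "nat \<Rightarrow> ereal"
  assumes "a \<le> liminf f" "b \<le> liminf g" "\<And>n. 0 \<le> f n" "\<And>n. 0 \<le> g n"
  shows "a + b \<le> liminf (\<lambda>n. f n + g n)"
  using assms by (intro order_trans[OF add_mono Liminf_add_le]) auto

lemma local_energy_lsc:
  fixes u v :: "'a::euclidean_space \<Rightarrow> real" and us vs :: "nat \<Rightarrow> 'a \<Rightarrow> real"
  assumes hF: "\<forall>j\<in>{1,2}. hyp_F (F j) (dF j) (ddF j)" and hh: "hyp_h h dh ddh"
    and cvx: "convex_on quad (\<lambda>p. F 1 (fst p) + F 2 (snd p) + 2 * \<epsilon>0 * h p)"
    and \<epsilon>: "0 < \<epsilon>" "\<epsilon> \<le> \<epsilon>0"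
    and dens: "prob_density u" "prob_density v" "\<And>n. prob_density (us n)" "\<And>n. prob_density (vs n)"
    and weak: "weakL1_conv us u" "weakL1_conv vs v"
  shows "enn2ereal (\<integral>\<^sup>+x. ennreal (local_density \<epsilon> F h (u x, v x)) \<partial>lborel)
    \<le> liminf (\<lambda>n. enn2ereal (\<integral>\<^sup>+x. ennreal (local_density \<epsilon> F h (us n x, vs n x)) \<partial>lborel))"
proof (rule weakL1_lsc_nn_integral_tangent[OF local_density_continuous[OF hF hh]
      local_density_deriv_continuous[OF hF hh] local_density_deriv_continuous[OF hF hh]
      local_density_nonneg[OF hF hh cvx \<epsilon>] local_density_above_tangent[OF hF hh cvx \<epsilon>]
      _ _ _ _ _ _ _ _ weak])
qed (use dens in \<open>auto simp: prob_density_def\<close>)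

theorem lemma3p2:
  fixes K :: "'a::euclidean_space \<Rightarrow> real"
    and F dF ddF :: "nat \<Rightarrow> real \<Rightarrow> real"
    and h :: "real \<times> real \<Rightarrow> real"
    and dh :: "nat \<Rightarrow> real \<times> real \<Rightarrow> real"
    and ddh :: "nat \<Rightarrow> nat \<Rightarrow> real \<times> real \<Rightarrow> real"
    and \<epsilon>0 \<epsilon> :: real
    and \<rho>1s \<rho>2s :: "nat \<Rightarrow> 'a \<Rightarrow> real"
    and \<rho>1 \<rho>2 :: "'a \<Rightarrow> real"
  assumes hK: "hyp_K K"
    and hF: "\<forall>j\<in>{1,2}. hyp_F (F j) (dF j) (ddF j)"
    and hh: "hyp_h h dh ddh"
    and htheta: "hyp_theta dF ddF ddh"
    and eps0_pos: "\<epsilon>0 > 0"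
    and eps0_convex: "convex_on quad (\<lambda>p. F 1 (fst p) + F 2 (snd p) + 2 * \<epsilon>0 * h p)"
    and eps: "0 < \<epsilon>" "\<epsilon> \<le> \<epsilon>0"
    and P2s: "\<forall>n. P2_density (\<rho>1s n) \<and> P2_density (\<rho>2s n)"
    and P2: "P2_density \<rho>1" "P2_density \<rho>2"
    and conv1: "weakL1_conv \<rho>1s \<rho>1"
    and conv2: "weakL1_conv \<rho>2s \<rho>2"
  shows "energy \<epsilon> F h K \<rho>1 \<rho>2 \<le> liminf (\<lambda>n. energy \<epsilon> F h K (\<rho>1s n) (\<rho>2s n))"
proof -
  note K = hyp_K_continuous[OF hK] hyp_K_nonneg[OF hK]
  note K_int = hyp_K_integrable_conv[OF hK]
  have P2s': "P2_density (\<rho>1s n)" "P2_density (\<rho>2s n)" for n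
    using P2s by auto
  note dens = P2[THEN P2_density_imp_prob_density] P2s'[THEN P2_density_imp_prob_density]
  have split: "energy \<epsilon> F h K u v
      = enn2ereal (\<integral>\<^sup>+x. ennreal (local_density \<epsilon> F h (u x, v x)) \<partial>lborel)
        + enn2ereal (\<integral>\<^sup>+x. ennreal (u x * conv K v x) \<partial>lborel)"
    if "P2_density u" "P2_density v" for u v
  proof (rule energy_eq_nn_integrals[OF local_density_continuous[OF hF hh] _ K])
    show "0 \<le> local_density \<epsilon> F h p" if "p \<in> quad" for p
      using local_density_nonneg[OF hF hh eps0_convex eps that] .
  qed (use that K_int P2_density_imp_prob_density in auto)
  show ?thesis
    using ereal_add_le_liminf_add[OF local_energy_lsc[OF hF hh eps0_convex eps dens conv1 conv2]
        weakL1_lsc_interaction[OF K dens K_int[OF P2(2)] K_int[OF P2s'(2)] conv1 conv2]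
        enn2ereal_nonneg enn2ereal_nonneg]
    by (simp add: split P2 P2s')
qed

end
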